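(* (1) If $\rho,\sigma\in S_n$ are disjoint (no index is moved by both), then $X^\rho_{\vec1}\otimes X^\sigma_{\vec1}=X^\sigma_{\vec1}\otimes X^\rho_{\vec1}=X^{\rho\sigma}_{\vec1}$. (2) Every bare defect $X^\sigma_{\vec1}$ can be written as a product of bare transposition defects: there are transpositions $\tau_1,\dots,\tau_m$ with $\sigma=\tau_1\cdots\tau_m$ and $X^\sigma_{\vec1}=X^{\tau_1}_{\vec1}\otimes(X^{\tau_2}_{\vec1}\otimes(\cdots\otimes X^{\tau_m}_{\vec1}))$.
   Context: Let $\mathcal{C}$ be a modular tensor category, $\mathrm{Irr}(\mathcal{C})$ its finite set of isomorphism classes of simple objects (containing $1$), $a\mapsto a^*$ duality, $C$ its fusion ring (free $\mathbb{Z}$-module on $\mathrm{Irr}(\mathcal{C})$, product $a\otimes b=\sum_cN_{ab}^cc$). Fix $n\ge2$. $C^{\boxtimes n}=C^{\otimes_{\mathbb{Z}}n}$ has basis the multilayer anyons $\vec a=a_1\boxtimes\cdots\boxtimes a_n$, layerwise product, unit $\vec1$; permutations compose right to left. For $\sigma\in S_n$ with orbits $\mathcal{O}(\sigma)$ (cycles incl. fixed points), $\vec a$ is $\sigma$-fixed iff constant on orbits. $C_\sigma$: free $\mathbb{Z}$-module on symbols $X^\sigma_{\vec a}$ ($\vec a$ $\sigma$-fixed), identified with $R_\sigma=\bigotimes_{O\in\mathcal{O}(\sigma)}C$; $X^\sigma_r$ for $r\in R_\sigma$; $X^\sigma_{\vec1}$ is the bare $\sigma$-defect; $C_{\mathrm{id}}=C^{\boxtimes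 n}$. Confinement $c_\sigma:C^{\boxtimes n}\to R_\sigma$, linear, $c_\sigma(\vec a)=\bigotimes_O(\bigotimes_{k\in O}a_k)$. Anyon–defect fusion $\vec a\otimes X^\sigma_{\vec b}=X^\sigma_{\vec b}\otimes\vec a:=X^\sigma_{c_\sigma(\vec a)\cdot\vec b}$. A $\sigma$-deconfinement $d_\sigma(\vec b)$: any $d\in C^{\boxtimes n}$ with nonnegative coefficients and $d\otimes X^\sigma_{\vec1}=X^\sigma_{\vec b}$. For $t=(ij)$, $\Omega_t=\sum_c\vec e_c$ ($c$ in layer $i$, $c^*$ in layer $j$, $1$ elsewhere). Following the paper's algorithm, $F(\rho,\sigma)$: write $\rho=t_1\cdots t_m$ with each disjoint cycle $(i_1\cdots i_l)$ written as $(i_1i_2)\cdots(i_{l-1}i_l)$; $\pi_{m+1}=\sigma$, $\pi_k=t_k\pi_{k+1}$; $F=\prod\Omega_{t_k}$ over $k$ with both indices of $t_k$ in a common cycle of $\pi_{k+1}$. Defect fusion is bilinear with $X^\rho_{\vec a}\otimes X^\sigma_{\vec b}:=(d_\rho(\vec a)\otimes d_\sigma(\vec b)\otimes F(\rho,\sigma))\otimes X^{\rho\sigma}_{\vec1}$. *)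

theory Defs
  imports "HOL-Combinatorics.Permutations" "HOL-Combinatorics.Transposition"
begin

text \<open>Only the fusion ring of the MTC enters the statement.  Layers are indexed 0..n-1.\<close>

record 'a fusion_ring =
  irr :: "'a set"
  one :: 'a
  dual :: "'a \<Rightarrow> 'a"
  N :: "'a \<Rightarrow> 'a \<Rightarrow> 'a \<Rightarrow> int"

definition fusion_data :: "'a fusion_ring \<Rightarrow> bool" where
  "fusion_data R \<longleftrightarrow>
     finite (irr R) \<and> one R \<in> irr R \<and>
     (\<forall>a\<in>irr R. dual R a \<in> irr R \<and> dual R (dual R a) = a) \<and>
     (\<forall>a b c. 0 \<le> N R a b c) \<and>
     (\<forall>a b c. a \<notin> irr R \<or> b \<notin> irr R \<or> c \<notin> irr R \<longrightarrow> N R a b c = 0) \<and>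
     (\<forall>a\<in>irr R. \<forall>c\<in>irr R. N R (one R) a c = (if a = c then 1 else 0)) \<and>
     (\<forall>a b c. N R a b c = N R b a c) \<and>
     (\<forall>a\<in>irr R. \<forall>b\<in>irr R. \<forall>c\<in>irr R. \<forall>d\<in>irr R.
        (\<Sum>e\<in>irr R. N R a b e * N R e c d) = (\<Sum>e\<in>irr R. N R b c e * N R a e d)) \<and>
     (\<forall>a\<in>irr R. \<forall>b\<in>irr R. N R a b (one R) = (if b = dual R a then 1 else 0)) \<and>
     (\<forall>a\<in>irr R. \<forall>b\<in>irr R. \<forall>c\<in>irr R. N R a b c = N R (dual R a) c b) \<and>
     (\<forall>a\<in>irr R. \<forall>b\<in>irr R. \<forall>c\<in>irr R.
        N R a b c = N R (dual R b) (dual R a) (dual R c))"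

type_synonym 'a celem = "'a \<Rightarrow> int"

definition cmult :: "'a fusion_ring \<Rightarrow> 'a celem \<Rightarrow> 'a celem \<Rightarrow> 'a celem" where
  "cmult R x y = (\<lambda>c. \<Sum>a\<in>irr R. \<Sum>b\<in>irr R. x a * y b * N R a b c)"

definition cunit :: "'a fusion_ring \<Rightarrow> 'a celem" where
  "cunit R = (\<lambda>c. if c = one R then 1 else 0)"

definition cbasis :: "'a \<Rightarrow> 'a celem" where
  "cbasis a = (\<lambda>c. if c = a then 1 else 0)"

definition cprod_list :: "'a fusion_ring \<Rightarrow> 'a list \<Rightarrow> 'a celem" where
  "cprod_list R xs = foldr (cmult R) (map cbasis xs) (cunit R)"

text \<open>A multilayer anyon is a function nat => 'a whose layers 0..n-1 are simples and
which is the unit object elsewhere.  Elements of C^{\<boxtimes>n} (and of R_sigma) are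
integer coefficient functions on multilayer anyons.\<close>

type_synonym 'a mla = "nat \<Rightarrow> 'a"
type_synonym 'a melem = "'a mla \<Rightarrow> int"

definition valid :: "'a fusion_ring \<Rightarrow> nat \<Rightarrow> 'a mla set" where
  "valid R n = {v. (\<forall>i<n. v i \<in> irr R) \<and> (\<forall>i\<ge>n. v i = one R)}"

definition telem :: "'a fusion_ring \<Rightarrow> nat \<Rightarrow> 'a melem \<Rightarrow> bool" where
  "telem R n x \<longleftrightarrow> (\<forall>v. v \<notin> valid R n \<longrightarrow> x v = 0)"

definition tbasis :: "'a mla \<Rightarrow> 'a melem" where
  "tbasis v = (\<lambda>c. if c = v then 1 else 0)"

definition tunit :: "'a fusion_ring \<Rightarrow> 'a melem" where
  "tunit R = tbasis (\<lambda>_. one R)"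

definition tmult :: "'a fusion_ring \<Rightarrow> nat \<Rightarrow> 'a melem \<Rightarrow> 'a melem \<Rightarrow> 'a melem" where
  "tmult R n x y = (\<lambda>c. if c \<in> valid R n then
      (\<Sum>a\<in>valid R n. \<Sum>b\<in>valid R n. x a * y b * (\<Prod>i<n. N R (a i) (b i) (c i)))
    else 0)"

definition orb :: "(nat \<Rightarrow> nat) \<Rightarrow> nat \<Rightarrow> nat set" where
  "orb \<sigma> k = {(\<sigma> ^^ j) k | j. True}"

definition orbits :: "nat \<Rightarrow> (nat \<Rightarrow> nat) \<Rightarrow> nat set set" where
  "orbits n \<sigma> = orb \<sigma> ` {..<n}"

definition fixed_vecs :: "'a fusion_ring \<Rightarrow> nat \<Rightarrow> (nat \<Rightarrow> nat) \<Rightarrow> 'a mla set" where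
  "fixed_vecs R n \<sigma> = {v \<in> valid R n. \<forall>k<n. v (\<sigma> k) = v k}"

text \<open>Product in R_sigma = tensor over orbits of C (orbit O represented by Min O).\<close>
definition rmult :: "'a fusion_ring \<Rightarrow> nat \<Rightarrow> (nat \<Rightarrow> nat) \<Rightarrow> 'a melem \<Rightarrow> 'a melem \<Rightarrow> 'a melem" where
  "rmult R n \<sigma> r s = (\<lambda>c. if c \<in> fixed_vecs R n \<sigma> then
      (\<Sum>a\<in>fixed_vecs R n \<sigma>. \<Sum>b\<in>fixed_vecs R n \<sigma>.
          r a * s b * (\<Prod>Ob\<in>orbits n \<sigma>. N R (a (Min Ob)) (b (Min Ob)) (c (Min Ob))))
    else 0)"

definition runit :: "'a fusion_ring \<Rightarrow> (nat \<Rightarrow> nat) \<Rightarrow> 'a melem" where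
  "runit R \<sigma> = tunit R"

definition conf :: "'a fusion_ring \<Rightarrow> nat \<Rightarrow> (nat \<Rightarrow> nat) \<Rightarrow> 'a melem \<Rightarrow> 'a melem" where
  "conf R n \<sigma> x = (\<lambda>b. if b \<in> fixed_vecs R n \<sigma> then
      (\<Sum>a\<in>valid R n. x a *
          (\<Prod>Ob\<in>orbits n \<sigma>. cprod_list R (map a (sorted_list_of_set Ob)) (b (Min Ob))))
    else 0)"

text \<open>A defect element X^sigma_r is represented by the pair (sigma, r), r in R_sigma.\<close>
type_synonym 'a defect = "(nat \<Rightarrow> nat) \<times> 'a melem"

definition bare :: "'a fusion_ring \<Rightarrow> (nat \<Rightarrow> nat) \<Rightarrow> 'a defect" where
  "bare R \<sigma> = (\<sigma>, runit R \<sigma>)"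

text \<open>Anyon-defect fusion  d \<otimes> X^sigma_r = X^sigma_{c_sigma(d) r}.\<close>
definition act :: "'a fusion_ring \<Rightarrow> nat \<Rightarrow> 'a melem \<Rightarrow> 'a defect \<Rightarrow> 'a defect" where
  "act R n d X = (fst X, rmult R n (fst X) (conf R n (fst X) d) (snd X))"

definition is_deconf :: "'a fusion_ring \<Rightarrow> nat \<Rightarrow> (nat \<Rightarrow> nat) \<Rightarrow> 'a mla \<Rightarrow> 'a melem \<Rightarrow> bool" where
  "is_deconf R n \<sigma> b d \<longleftrightarrow> telem R n d \<and> (\<forall>v. 0 \<le> d v) \<and>
     act R n d (bare R \<sigma>) = (\<sigma>, tbasis b)"

definition omega :: "'a fusion_ring \<Rightarrow> nat \<Rightarrow> nat \<Rightarrow> nat \<Rightarrow> 'a melem" where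
  "omega R n i j = (\<lambda>v. if v \<in> valid R n \<and> v j = dual R (v i) \<and>
      (\<forall>k<n. k \<noteq> i \<and> k \<noteq> j \<longrightarrow> v k = one R) then 1 else 0)"

text \<open>A disjoint cycle decomposition of rho (cycles of length >= 2, any order,
any starting point): each list [i1,...,il] means rho i_j = i_{j+1}, rho i_l = i1.\<close>
definition is_cycle_decomp :: "nat \<Rightarrow> (nat \<Rightarrow> nat) \<Rightarrow> nat list list \<Rightarrow> bool" where
  "is_cycle_decomp n \<rho> cs \<longleftrightarrow>
     distinct cs \<and>
     (\<forall>c\<in>set cs. 2 \<le> length c \<and> distinct c \<and>
        (\<forall>j<length c. \<rho> (c ! j) = c ! ((j + 1) mod length c))) \<and>
     (\<forall>c1\<in>set cs. \<forall>c2\<in>set cs. c1 \<noteq> c2 \<longrightarrow> set c1 \<inter> set c2 = {}) \<and>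
     (\<Union>c\<in>set cs. set c) = {k. k < n \<and> \<rho> k \<noteq> k}"

text \<open>Cycle (i1 ... il) written as (i1 i2)(i2 i3)...(i_{l-1} i_l).\<close>
definition transp_list :: "nat list list \<Rightarrow> (nat \<times> nat) list" where
  "transp_list cs = concat (map (\<lambda>c. map (\<lambda>j. (c ! j, c ! Suc j)) [0..<length c - 1]) cs)"

text \<open>prod_transp [t_k,...,t_m] sigma = t_k ... t_m sigma  (composition right to left).\<close>
definition prod_transp :: "(nat \<times> nat) list \<Rightarrow> (nat \<Rightarrow> nat) \<Rightarrow> (nat \<Rightarrow> nat)" where
  "prod_transp ts \<sigma> = foldr (\<lambda>(a, b) p. transpose a b \<circ> p) ts \<sigma>"

text \<open>F for rho = t_1 ... t_m: product of Omega_{t_k} over k such that both indices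
of t_k lie in a common cycle of pi_{k+1} = t_{k+1} ... t_m sigma.\<close>
fun Fcomp :: "'a fusion_ring \<Rightarrow> nat \<Rightarrow> (nat \<times> nat) list \<Rightarrow> (nat \<Rightarrow> nat) \<Rightarrow> 'a melem" where
  "Fcomp R n [] \<sigma> = tunit R"
| "Fcomp R n ((i, j) # ts) \<sigma> =
     (if j \<in> orb (prod_transp ts \<sigma>) i
      then tmult R n (omega R n i j) (Fcomp R n ts \<sigma>)
      else Fcomp R n ts \<sigma>)"

text \<open>Possible results of X^rho_a \<otimes> X^sigma_b for basis anyons a, b (any admissible
choice of deconfinements and of the cycle-decomposition used in the algorithm).\<close>
definition fus_basis_out :: "'a fusion_ring \<Rightarrow> nat \<Rightarrow> (nat \<Rightarrow> nat) \<Rightarrow> 'a mla \<Rightarrow>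
    (nat \<Rightarrow> nat) \<Rightarrow> 'a mla \<Rightarrow> 'a defect \<Rightarrow> bool" where
  "fus_basis_out R n \<rho> a \<sigma> b z \<longleftrightarrow>
     (\<exists>cs d1 d2. is_cycle_decomp n \<rho> cs \<and> is_deconf R n \<rho> a d1 \<and> is_deconf R n \<sigma> b d2 \<and>
        z = act R n (tmult R n (tmult R n d1 d2) (Fcomp R n (transp_list cs) \<sigma>))
                    (bare R (\<rho> \<circ> \<sigma>)))"

text \<open>Bilinear extension: z is a possible value of X \<otimes> Y.\<close>
definition fus_rel :: "'a fusion_ring \<Rightarrow> nat \<Rightarrow> 'a defect \<Rightarrow> 'a defect \<Rightarrow> 'a defect \<Rightarrow> bool" where
  "fus_rel R n X Y z \<longleftrightarrow>
     (\<exists>ch. (\<forall>a\<in>fixed_vecs R n (fst X). \<forall>b\<in>fixed_vecs R n (fst Y).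
              fus_basis_out R n (fst X) a (fst Y) b (fst X \<circ> fst Y, ch a b)) \<and>
           z = (fst X \<circ> fst Y, \<lambda>c. \<Sum>a\<in>fixed_vecs R n (fst X). \<Sum>b\<in>fixed_vecs R n (fst Y).
                    snd X a * snd Y b * ch a b c))"

text \<open>Possible values of X^{t_1}_1 \<otimes> (X^{t_2}_1 \<otimes> (... \<otimes> X^{t_m}_1)); the empty
product is the bare identity defect.\<close>
fun nested_outs :: "'a fusion_ring \<Rightarrow> nat \<Rightarrow> (nat \<Rightarrow> nat) list \<Rightarrow> 'a defect set" where
  "nested_outs R n [] = {bare R id}"
| "nested_outs R n [t] = {bare R t}"
| "nested_outs R n (t # t' # ts) =
     {z. \<exists>y\<in>nested_outs R n (t' # ts). fus_rel R n (bare R t) y z}"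

definition is_transposition :: "nat \<Rightarrow> (nat \<Rightarrow> nat) \<Rightarrow> bool" where
  "is_transposition n \<tau> \<longleftrightarrow> (\<exists>i j. i < n \<and> j < n \<and> i \<noteq> j \<and> \<tau> = transpose i j)"

end

theory Submission
  imports Defs "HOL-Library.Disjoint_Sets" "HOL-Combinatorics.Orbits" "HOL-Combinatorics.Cycles"
begin

(* Fusing the bare defects of rho and sigma involves deconfinements of the vacuum for rho and for
   sigma and the correction factor F(rho, sigma). Since all fusion coefficients are nonnegative
   and no product of simples vanishes, a deconfinement of the vacuum is a single multilayer anyon
   whose product along every orbit is exactly the vacuum. If F(rho, sigma) is trivial and every
   orbit of rho sigma is a union of rho-orbits and of sigma-orbits, the confinement along rho sigma
   of the product of two such anyons is the vacuum again, so the fusion is the bare defect of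
   rho sigma. Both conditions hold when rho and sigma are disjoint, and when rho is a transposition
   (i j) and sigma fixes i. Peeling off sigma = (i sigma(i)) sigma' with sigma' fixing i then
   writes every bare defect as a nested fusion of bare transposition defects. *)

lemma sum_swap_to_inner:
  "(\<Sum>e\<in>A. \<Sum>a\<in>B. \<Sum>b\<in>C. f a b e) = (\<Sum>a\<in>B. \<Sum>b\<in>C. \<Sum>e\<in>A. f a b e)"
  by (subst sum.swap) (rule sum.cong[OF refl], rule sum.swap)

lemma int_nonneg_sum_eq_1_imp_delta:
  assumes fin: "finite A" and nonneg: "\<And>x. 0 \<le> f x" and out: "\<And>x. x \<notin> A \<Longrightarrow> f x = 0"
    and sum: "sum f A = (1::int)"
  shows "\<exists>a\<in>A. f = (\<lambda>x. if x = a then 1 else 0)"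
proof -
  have "\<exists>a\<in>A. f a \<noteq> 0"
  proof (rule ccontr)
    assume "\<not> (\<exists>a\<in>A. f a \<noteq> 0)"
    then have "sum f A = 0" by simp
    then show False using sum by simp
  qed
  then obtain a where a: "a \<in> A" "f a \<noteq> 0" by blast
  have "f a + sum f (A - {a}) = 1" using fin sum a(1) by (simp add: sum.remove)
  moreover have "0 \<le> sum f (A - {a})" using nonneg by (simp add: sum_nonneg)
  ultimately have fa: "f a = 1" and rest: "sum f (A - {a}) = 0"
    using a(2) nonneg[of a] by linarith+
  have "\<forall>x\<in>A - {a}. f x = 0" using rest fin nonneg by (simp add: sum_nonneg_eq_0_iff)
  then have "f x = (if x = a then 1 else 0)" for x using fa out by (cases "x \<in> A") auto
  then show ?thesis using a(1) by blast
qed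

lemma int_prod_ge_1_le_1:
  assumes "finite P" "\<forall>B\<in>P. (1::int) \<le> f B" "prod f P \<le> 1" "B \<in> P"
  shows "f B = 1"
proof -
  have "prod f P = f B * prod f (P - {B})" using assms(1,4) by (rule prod.remove)
  moreover have "1 \<le> prod f (P - {B})" using assms(2) by (intro prod_ge_1) auto
  moreover have "1 \<le> f B" using assms(2,4) by blast
  ultimately show ?thesis using assms(3) by (smt (verit) mult_le_cancel_left1)
qed

lemma partition_on_block_fun:
  assumes P: "partition_on A P"
  obtains \<beta> where "\<forall>i\<in>A. \<beta> i \<in> P \<and> i \<in> \<beta> i" "\<And>B i. B \<in> P \<Longrightarrow> i \<in> B \<Longrightarrow> \<beta> i = B"
proof -
  have "\<forall>i\<in>A. \<exists>B. B \<in> P \<and> i \<in> B" using partition_onD1[OF P] by blast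
  then have "\<exists>\<beta>. \<forall>i\<in>A. \<beta> i \<in> P \<and> i \<in> \<beta> i" by (rule bchoice)
  then obtain \<beta> where \<beta>: "\<forall>i\<in>A. \<beta> i \<in> P \<and> i \<in> \<beta> i" by blast
  moreover have "\<beta> i = B" if B: "B \<in> P" "i \<in> B" for B i
  proof (rule ccontr)
    assume "\<beta> i \<noteq> B"
    moreover have "i \<in> A" using partition_onD1[OF P] B by blast
    ultimately have "\<beta> i \<inter> B = {}" using disjointD[OF partition_onD2[OF P]] \<beta> B by blast
    then show False using \<beta> \<open>i \<in> A\<close> B by blast
  qed
  ultimately show ?thesis by (rule that)
qed

section \<open>Orbits and cycle decompositions\<close>

lemma permutes_lessThan_permutation: "\<tau> permutes {..<n::nat} \<Longrightarrow> permutation \<tau>"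
  by (rule permutes_imp_permutation) simp_all

lemma orb_eq_orbit: "permutation \<tau> \<Longrightarrow> orb \<tau> k = orbit \<tau> k"
  unfolding orb_def by (rule orbit_altdef_permutation[symmetric])

lemma orb_self: "k \<in> orb \<tau> k"
  unfolding orb_def by (auto intro: exI[of _ 0])

lemma orb_apply: "x \<in> orb \<tau> k \<Longrightarrow> \<tau> x \<in> orb \<tau> k"
  unfolding orb_def by (auto intro: exI[of _ "Suc _"])

lemma orb_eq: "permutation \<tau> \<Longrightarrow> x \<in> orb \<tau> k \<Longrightarrow> orb \<tau> x = orb \<tau> k"
  by (simp add: orb_eq_orbit orbit_cyclic_eq3 cyclic_on_orbit')

lemma orb_fixpoint:
  assumes "\<tau> k = k" shows "orb \<tau> k = {k}"
proof -
  have "(\<tau> ^^ j) k = k" for j by (induction j) (simp_all add: assms)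
  then show ?thesis unfolding orb_def by simp
qed

lemma orb_subset: "\<tau> permutes {..<n} \<Longrightarrow> k < n \<Longrightarrow> orb \<tau> k \<subseteq> {..<n}"
  using permutes_orbit_subset[of \<tau> "{..<n}" k] by (simp add: orb_eq_orbit permutes_lessThan_permutation)

lemma finite_orb: "\<tau> permutes {..<n} \<Longrightarrow> k < n \<Longrightarrow> finite (orb \<tau> k)"
  by (meson finite_lessThan finite_subset orb_subset)

lemma orb_in_orbits: "k < n \<Longrightarrow> orb \<tau> k \<in> orbits n \<tau>"
  unfolding orbits_def by simp

lemma finite_orbits: "finite (orbits n \<tau>)"
  unfolding orbits_def by simp

lemma orbits_eq_orb:
  assumes "\<tau> permutes {..<n}" "B \<in> orbits n \<tau>" "x \<in> B"
  shows "orb \<tau> x = B"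
proof -
  obtain k where "B = orb \<tau> k" using assms(2) unfolding orbits_def by blast
  then show ?thesis using assms(3) orb_eq permutes_lessThan_permutation[OF assms(1)] by simp
qed

lemma orbitsD:
  assumes "\<tau> permutes {..<n}" "B \<in> orbits n \<tau>"
  shows "finite B" "B \<subseteq> {..<n}" "Min B \<in> B" "Min B < n"
proof -
  obtain k where k: "k < n" "B = orb \<tau> k" using assms(2) unfolding orbits_def by blast
  show fin: "finite B" and sub: "B \<subseteq> {..<n}" using k finite_orb orb_subset assms(1) by blast+
  show Min: "Min B \<in> B" using k orb_self fin Min_in by blast
  show "Min B < n" using Min sub by blast
qed

lemma partition_on_orbits: "\<tau> permutes {..<n} \<Longrightarrow> partition_on {..<n} (orbits n \<tau>)"
proof (rule partition_onI)
  assume p: "\<tau> permutes {..<n}"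
  show "\<Union>(orbits n \<tau>) = {..<n}"
    using orbitsD(2)[OF p] orb_in_orbits orb_self by blast
  show "disjnt B C" if "B \<in> orbits n \<tau>" "C \<in> orbits n \<tau>" "B \<noteq> C" for B C
    using that orbits_eq_orb[OF p] unfolding disjnt_def by blast
  show "{} \<notin> orbits n \<tau>"
    unfolding orbits_def using orb_self by blast
qed

lemma orb_comp_closed_right:
  assumes "permutation (\<rho> \<circ> \<sigma>)" "\<And>x. \<rho> x \<in> orb (\<rho> \<circ> \<sigma>) x"
  shows "\<sigma> x \<in> orb (\<rho> \<circ> \<sigma>) x"
proof -
  have "(\<rho> \<circ> \<sigma>) x \<in> orb (\<rho> \<circ> \<sigma>) (\<sigma> x) \<inter> orb (\<rho> \<circ> \<sigma>) x"
    using assms(2)[of "\<sigma> x"] orb_apply[OF orb_self, of "\<rho> \<circ> \<sigma>" x] by simp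
  then have "orb (\<rho> \<circ> \<sigma>) (\<sigma> x) = orb (\<rho> \<circ> \<sigma>) x"
    using orb_eq[OF assms(1)] by blast
  then show ?thesis using orb_self[of "\<sigma> x" "\<rho> \<circ> \<sigma>"] by simp
qed

lemma orb_closed:
  assumes "permutation \<pi>" "\<And>x. f x \<in> orb \<pi> x" "x \<in> orb \<pi> k"
  shows "f x \<in> orb \<pi> k"
  using assms(2)[of x] orb_eq[OF assms(1,3)] by simp

lemma inj_apply_moved: "inj f \<Longrightarrow> f x \<noteq> x \<Longrightarrow> f (f x) \<noteq> f x"
  by (metis injD)

lemma disjoint_perms_commute:
  assumes "inj \<rho>" "inj \<sigma>" "\<forall>k. \<rho> k = k \<or> \<sigma> k = k"
  shows "\<sigma> \<circ> \<rho> = \<rho> \<circ> \<sigma>"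
proof
  fix k
  show "(\<sigma> \<circ> \<rho>) k = (\<rho> \<circ> \<sigma>) k"
  proof (cases "\<rho> k = k")
    case True
    have "\<rho> (\<sigma> k) = \<sigma> k"
    proof (cases "\<sigma> k = k")
      case False
      then show ?thesis using inj_apply_moved[OF assms(2) False] assms(3) by blast
    qed (use True in simp)
    then show ?thesis using True by simp
  next
    case False
    then have "\<sigma> k = k" "\<sigma> (\<rho> k) = \<rho> k"
      using assms(3) inj_apply_moved[OF assms(1) False] by blast+
    then show ?thesis by simp
  qed
qed

lemma orb_comp_disjoint:
  assumes "inj \<sigma>" "\<forall>k. \<rho> k = k \<or> \<sigma> k = k"
  shows "\<rho> x \<in> orb (\<rho> \<circ> \<sigma>) x"
  using assms orb_self[of x] orb_apply[OF orb_self, of "\<rho> \<circ> \<sigma>" x] by (cases "\<rho> x = x") auto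

lemma orb_transpose_comp:
  assumes p: "permutation (transpose i j \<circ> \<pi>)" and fix_i: "\<pi> i = i"
  shows "transpose i j x \<in> orb (transpose i j \<circ> \<pi>) x"
proof -
  let ?t = "transpose i j \<circ> \<pi>"
  have j: "j \<in> orb ?t i" using orb_apply[OF orb_self, of ?t i] fix_i by simp
  then have "i \<in> orb ?t j" using orb_eq[OF p j] orb_self by metis
  then show ?thesis using j orb_self[of x] by (auto simp: transpose_def)
qed

lemma support_props:
  assumes p: "permutation \<rho>"
  shows "set (support \<rho> k) = orb \<rho> k" and "support \<rho> k ! 0 = k" and "distinct (support \<rho> k)"
    and "\<rho> k \<noteq> k \<Longrightarrow> 2 \<le> length (support \<rho> k)"
    and "j < length (support \<rho> k) \<Longrightarrow>
      \<rho> (support \<rho> k ! j) = support \<rho> k ! ((j + 1) mod length (support \<rho> k))"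
proof -
  let ?l = "least_power \<rho> k"
  have l: "0 < ?l" "(\<rho> ^^ ?l) k = k" using least_power_of_permutation[OF p] by auto
  show "set (support \<rho> k) = orb \<rho> k" unfolding support_set[OF p] orb_def by auto
  show "support \<rho> k ! 0 = k" using l by simp
  show "distinct (support \<rho> k)" by (rule cycle_of_permutation[OF p])
  show "\<rho> k \<noteq> k \<Longrightarrow> 2 \<le> length (support \<rho> k)" using least_power_gt_one[OF p] by fastforce
  assume j: "j < length (support \<rho> k)"
  show "\<rho> (support \<rho> k ! j) = support \<rho> k ! ((j + 1) mod length (support \<rho> k))"
  proof (cases "j + 1 < ?l")
    case False
    then have "Suc j = ?l" using j by simp
    moreover have "\<rho> (support \<rho> k ! j) = (\<rho> ^^ Suc j) k" using j by simp
    ultimately show ?thesis using l by simp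
  qed (use j in simp)
qed

lemma orb_moved:
  assumes "permutation \<rho>" "\<rho> k \<noteq> k" "x \<in> orb \<rho> k"
  shows "\<rho> x \<noteq> x"
proof
  assume "\<rho> x = x"
  then have "orb \<rho> k = {x}" using orb_eq[OF assms(1,3)] orb_fixpoint[of \<rho> x] by simp
  then show False using orb_self[of k \<rho>] assms(2) \<open>\<rho> x = x\<close> by simp
qed

lemma Union_orb_least_moved:
  assumes p: "\<rho> permutes {..<n}"
  shows "(\<Union>k\<in>{k. k < n \<and> \<rho> k \<noteq> k \<and> k = Min (orb \<rho> k)}. orb \<rho> k) = {k. k < n \<and> \<rho> k \<noteq> k}"
proof (intro set_eqI iffI)
  have perm: "permutation \<rho>" by (rule permutes_lessThan_permutation[OF p])
  fix x
  show "x \<in> (\<Union>k\<in>{k. k < n \<and> \<rho> k \<noteq> k \<and> k = Min (orb \<rho> k)}. orb \<rho> k) \<Longrightarrow> x \<in> {k. k < n \<and> \<rho> k \<noteq> k}"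
    using orb_subset[OF p] orb_moved[OF perm] by blast
  assume x: "x \<in> {k. k < n \<and> \<rho> k \<noteq> k}"
  let ?m = "Min (orb \<rho> x)"
  have m: "?m \<in> orb \<rho> x" using finite_orb[OF p] orb_self x by (metis Min_in empty_iff mem_Collect_eq)
  then have "orb \<rho> ?m = orb \<rho> x" by (rule orb_eq[OF perm])
  moreover have "?m < n" using m orb_subset[OF p] x by auto
  moreover have "\<rho> ?m \<noteq> ?m" using orb_moved[OF perm] m x by blast
  ultimately show "x \<in> (\<Union>k\<in>{k. k < n \<and> \<rho> k \<noteq> k \<and> k = Min (orb \<rho> k)}. orb \<rho> k)"
    using orb_self[of x \<rho>] by auto
qed

text \<open>Each nontrivial cycle is listed starting from its least element.\<close>
lemma cycle_decomp_exists:
  assumes p: "\<rho> permutes {..<n}"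
  shows "\<exists>cs. is_cycle_decomp n \<rho> cs"
proof -
  have perm: "permutation \<rho>" by (rule permutes_lessThan_permutation[OF p])
  note supp = support_props[OF perm]
  define reps where "reps = filter (\<lambda>k. \<rho> k \<noteq> k \<and> k = Min (orb \<rho> k)) [0..<n]"
  define cs where "cs = map (support \<rho>) reps"
  have reps: "set reps = {k. k < n \<and> \<rho> k \<noteq> k \<and> k = Min (orb \<rho> k)}"
    unfolding reps_def by auto
  have "inj_on (support \<rho>) (set reps)" by (rule inj_onI) (metis supp(2))
  then have "distinct cs" unfolding cs_def reps_def by (simp add: distinct_map)
  moreover have "\<forall>c\<in>set cs. 2 \<le> length c \<and> distinct c \<and>
      (\<forall>j<length c. \<rho> (c ! j) = c ! ((j + 1) mod length c))"
  proof
    fix c assume "c \<in> set cs"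
    then obtain k where "k \<in> set reps" "c = support \<rho> k" unfolding cs_def by auto
    then show "2 \<le> length c \<and> distinct c \<and> (\<forall>j<length c. \<rho> (c ! j) = c ! ((j + 1) mod length c))"
      using supp(3)[of k] supp(4)[of k] supp(5)[of _ k] reps by blast
  qed
  moreover have "set c1 \<inter> set c2 = {}" if "c1 \<in> set cs" "c2 \<in> set cs" "c1 \<noteq> c2" for c1 c2
  proof -
    note c = that
    obtain a b where ab: "a \<in> set reps" "b \<in> set reps" "c1 = support \<rho> a" "c2 = support \<rho> b"
      using c(1,2) unfolding cs_def by auto
    have "a = Min (orb \<rho> a)" "b = Min (orb \<rho> b)" using ab(1,2) reps by blast+
    then have "orb \<rho> a \<noteq> orb \<rho> b" using ab(3,4) c(3) by auto
    then show ?thesis using ab(3,4) supp(1) orb_eq[OF perm] by blast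
  qed
  moreover have "(\<Union>c\<in>set cs. set c) = {k. k < n \<and> \<rho> k \<noteq> k}"
    using Union_orb_least_moved[OF p] supp(1) unfolding cs_def by (simp add: reps)
  ultimately show ?thesis unfolding is_cycle_decomp_def by blast
qed

section \<open>The correction factor\<close>

definition transp_points :: "(nat \<times> nat) list \<Rightarrow> nat set" where
  "transp_points ts = fst ` set ts \<union> snd ` set ts"

fun heads_fixed :: "(nat \<Rightarrow> nat) \<Rightarrow> (nat \<times> nat) list \<Rightarrow> bool" where
  "heads_fixed \<sigma> [] = True"
| "heads_fixed \<sigma> ((i, j) # ts) \<longleftrightarrow> i \<noteq> j \<and> \<sigma> i = i \<and> i \<notin> transp_points ts \<and> heads_fixed \<sigma> ts"

definition cycle_transps :: "nat list \<Rightarrow> (nat \<times> nat) list" where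
  "cycle_transps c = map (\<lambda>j. (c ! j, c ! Suc j)) [0..<length c - 1]"

lemma prod_transp_fixed: "x \<notin> transp_points ts \<Longrightarrow> \<sigma> x = x \<Longrightarrow> prod_transp ts \<sigma> x = x"
  by (induction ts) (auto simp: prod_transp_def transp_points_def transpose_def)

text \<open>The first point of each transposition is fixed by the product of the later ones, so it
  has a singleton orbit and no factor \<Omega> is picked up.\<close>
lemma Fcomp_heads_fixed: "heads_fixed \<sigma> ts \<Longrightarrow> Fcomp R n ts \<sigma> = tunit R"
proof (induction ts)
  case (Cons t ts)
  obtain i j where t: "t = (i, j)" by fastforce
  then have "prod_transp ts \<sigma> i = i" using Cons.prems prod_transp_fixed by simp
  then have "j \<notin> orb (prod_transp ts \<sigma>) i" using Cons.prems t by (simp add: orb_fixpoint)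
  then show ?case using Cons t by simp
qed simp

lemma Fcomp_single:
  assumes "permutation \<pi>" "x \<noteq> y" "\<pi> x = x \<or> \<pi> y = y"
  shows "Fcomp R n [(x, y)] \<pi> = tunit R"
proof -
  have "y \<notin> orb \<pi> x"
  proof
    assume y: "y \<in> orb \<pi> x"
    then have "orb \<pi> y = orb \<pi> x" by (rule orb_eq[OF assms(1)])
    then show False using assms(2,3) y orb_self[of x \<pi>] by (auto simp: orb_fixpoint)
  qed
  then show ?thesis by (simp add: prod_transp_def)
qed

lemma transp_list_Cons: "transp_list (c # cs) = cycle_transps c @ transp_list cs"
  unfolding transp_list_def cycle_transps_def by simp

lemma cycle_transps_Cons: "c \<noteq> [] \<Longrightarrow> cycle_transps (a # c) = (a, hd c) # cycle_transps c"
  by (cases c) (simp_all add: cycle_transps_def upt_conv_Cons map_Suc_upt[symmetric] hd_conv_nth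
      del: upt_Suc)

lemma transp_points_append: "transp_points (xs @ ys) = transp_points xs \<union> transp_points ys"
  unfolding transp_points_def by auto

lemma transp_points_cycle_transps: "transp_points (cycle_transps c) \<subseteq> set c"
  unfolding transp_points_def cycle_transps_def by auto

lemma transp_points_transp_list: "transp_points (transp_list cs) \<subseteq> (\<Union>c\<in>set cs. set c)"
  using transp_points_cycle_transps
  by (induction cs) (auto simp: transp_list_Cons transp_points_append transp_list_def transp_points_def)

lemma heads_fixed_append:
  "heads_fixed \<sigma> xs \<Longrightarrow> heads_fixed \<sigma> ys \<Longrightarrow> fst ` set xs \<inter> transp_points ys = {} \<Longrightarrow>
     heads_fixed \<sigma> (xs @ ys)"
proof (induction xs)
  case (Cons t xs)
  then show ?case by (cases t) (auto simp: transp_points_append)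
qed simp

lemma heads_fixed_cycle_transps: "distinct c \<Longrightarrow> \<forall>x\<in>set c. \<sigma> x = x \<Longrightarrow> heads_fixed \<sigma> (cycle_transps c)"
proof (induction c)
  case (Cons a c)
  show ?case
  proof (cases "c = []")
    case False
    then show ?thesis
      using Cons transp_points_cycle_transps[of c] by (auto simp: cycle_transps_Cons hd_in_set)
  qed (simp add: cycle_transps_def)
qed (simp add: cycle_transps_def)

lemma Fcomp_disjoint:
  assumes cs: "is_cycle_decomp n \<rho> cs" and disj: "\<forall>k. \<rho> k = k \<or> \<sigma> k = k"
  shows "Fcomp R n (transp_list cs) \<sigma> = tunit R"
proof -
  have moved: "\<rho> x \<noteq> x" if "c \<in> set cs" "x \<in> set c" for c x
    using cs that unfolding is_cycle_decomp_def by blast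
  have "distinct cs" using cs unfolding is_cycle_decomp_def by simp
  moreover have "\<forall>c\<in>set cs. distinct c \<and> (\<forall>x\<in>set c. \<sigma> x = x)"
    using cs disj moved unfolding is_cycle_decomp_def by metis
  moreover have "\<forall>c1\<in>set cs. \<forall>c2\<in>set cs. c1 \<noteq> c2 \<longrightarrow> set c1 \<inter> set c2 = {}"
    using cs unfolding is_cycle_decomp_def by simp
  ultimately have "heads_fixed \<sigma> (transp_list cs)"
  proof (induction cs)
    case (Cons c cs)
    have "fst ` set (cycle_transps c) \<subseteq> set c"
      using transp_points_cycle_transps[of c] unfolding transp_points_def by blast
    moreover have "set c \<inter> (\<Union>c'\<in>set cs. set c') = {}" using Cons.prems(1,3) by auto
    ultimately have "fst ` set (cycle_transps c) \<inter> transp_points (transp_list cs) = {}"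
      using transp_points_transp_list[of cs] by blast
    then show ?case
      using Cons by (simp add: transp_list_Cons heads_fixed_append heads_fixed_cycle_transps)
  qed (simp add: transp_list_def)
  then show ?thesis by (rule Fcomp_heads_fixed)
qed

lemma transp_list_transpose:
  assumes ij: "i \<noteq> j" "i < n" "j < n" and cs: "is_cycle_decomp n (transpose i j) cs"
  shows "\<exists>x y. transp_list cs = [(x, y)] \<and> {x, y} = {i, j}"
proof -
  have "{k. k < n \<and> transpose i j k \<noteq> k} = {i, j}" using ij by (auto simp: transpose_def)
  then have U: "(\<Union>c\<in>set cs. set c) = {i, j}" using cs unfolding is_cycle_decomp_def by simp
  have each: "set c = {i, j} \<and> length c = 2" if c: "c \<in> set cs" for c
  proof -
    have d: "distinct c" and l: "2 \<le> length c" using cs c unfolding is_cycle_decomp_def by auto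
    have sub: "set c \<subseteq> {i, j}" using U c by blast
    have "length c \<le> card {i, j}" using card_mono[OF _ sub] distinct_card[OF d] by simp
    then have "length c = 2" using l ij(1) by simp
    moreover have "card (set c) = card {i, j}" using calculation distinct_card[OF d] ij(1) by simp
    ultimately show ?thesis using card_subset_eq[OF _ sub] by simp
  qed
  obtain c cs' where ccs: "cs = c # cs'" using U by (cases cs) auto
  have "cs' = []"
  proof (rule ccontr)
    assume "cs' \<noteq> []"
    then obtain c' where "c' \<in> set cs'" by (cases cs') auto
    then show False using cs ccs each unfolding is_cycle_decomp_def by force
  qed
  moreover obtain x y where "c = [x, y]"
    using each[of c] ccs by (auto simp: numeral_2_eq_2 length_Suc_conv)
  ultimately show ?thesis using each[of c] ccs by (auto simp: transp_list_def)
qed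

lemma Fcomp_transpose:
  assumes p: "\<pi> permutes {..<n}" and fix_i: "\<pi> i = i" and ij: "i \<noteq> j" "i < n" "j < n"
    and cs: "is_cycle_decomp n (transpose i j) cs"
  shows "Fcomp R n (transp_list cs) \<pi> = tunit R"
proof -
  obtain x y where xy: "transp_list cs = [(x, y)]" "{x, y} = {i, j}"
    using transp_list_transpose[OF ij cs] by blast
  then have "x \<noteq> y" "\<pi> x = x \<or> \<pi> y = y" using ij(1) fix_i by (auto simp: doubleton_eq_iff)
  then show ?thesis unfolding xy(1) by (rule Fcomp_single[OF permutes_lessThan_permutation[OF p]])
qed

section \<open>Multilayer anyons\<close>

definition one_vec :: "'a fusion_ring \<Rightarrow> 'a mla" where
  "one_vec R = (\<lambda>_. one R)"

definition tensor :: "'a fusion_ring \<Rightarrow> nat \<Rightarrow> (nat \<Rightarrow> 'a celem) \<Rightarrow> 'a melem" where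
  "tensor R n g = (\<lambda>c. if c \<in> valid R n then \<Prod>i<n. g i (c i) else 0)"

definition orbit_vec :: "'a fusion_ring \<Rightarrow> nat \<Rightarrow> (nat \<Rightarrow> nat) \<Rightarrow> (nat set \<Rightarrow> 'a) \<Rightarrow> 'a mla" where
  "orbit_vec R n \<tau> y = (\<lambda>k. if k < n then y (orb \<tau> k) else one R)"

lemma cunit_eq_cbasis: "cunit R = cbasis (one R)"
  unfolding cunit_def cbasis_def by simp

lemma tunit_eq_tbasis: "tunit R = tbasis (one_vec R)"
  unfolding tunit_def one_vec_def ..

lemma sum_tbasis_mult: "finite A \<Longrightarrow> w \<in> A \<Longrightarrow> (\<Sum>b\<in>A. tbasis w b * f b) = (f w :: int)"
  by (simp add: tbasis_def if_distrib[of "\<lambda>u. u * _"] cong: if_cong)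

lemma sum_sum_mult_tbasis:
  "finite B \<Longrightarrow> w \<in> B \<Longrightarrow>
     (\<Sum>a\<in>A. \<Sum>b\<in>B. x a * tbasis w b * f a b) = (\<Sum>a\<in>A. x a * f a w :: int)"
  by (simp add: mult.assoc mult.left_commute[of "x _"] sum_distrib_left[symmetric] sum_tbasis_mult)

lemma sum_sum_tbasis_mult:
  "finite A \<Longrightarrow> finite B \<Longrightarrow> v \<in> A \<Longrightarrow> w \<in> B \<Longrightarrow>
     (\<Sum>a\<in>A. \<Sum>b\<in>B. tbasis v a * tbasis w b * f a b) = (f v w :: int)"
  by (simp add: mult.assoc sum_distrib_left[symmetric] sum_tbasis_mult)

lemma valid_irr: "v \<in> valid R n \<Longrightarrow> i < n \<Longrightarrow> v i \<in> irr R"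
  unfolding valid_def by simp

lemma fixed_vecs_valid: "a \<in> fixed_vecs R n \<tau> \<Longrightarrow> a \<in> valid R n"
  unfolding fixed_vecs_def by simp

lemma fixed_vecs_const_on_orb:
  assumes "\<tau> permutes {..<n}" "a \<in> fixed_vecs R n \<tau>" "k < n" "x \<in> orb \<tau> k"
  shows "a x = a k"
proof -
  obtain j where x: "x = (\<tau> ^^ j) k" using assms(4) unfolding orb_def by blast
  have "\<tau> y < n" if "y < n" for y using permutes_in_image[OF assms(1), of y] that by simp
  then have "(\<tau> ^^ j) k < n \<and> a ((\<tau> ^^ j) k) = a k"
    by (induction j) (use assms(2,3) in \<open>auto simp: fixed_vecs_def\<close>)
  then show ?thesis using x by simp
qed

lemma fixed_vecs_eqI:
  assumes p: "\<tau> permutes {..<n}" and a: "a \<in> fixed_vecs R n \<tau>" and c: "c \<in> fixed_vecs R n \<tau>"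
    and eq: "\<forall>B\<in>orbits n \<tau>. a (Min B) = c (Min B)"
  shows "a = c"
proof
  fix k
  show "a k = c k"
  proof (cases "k < n")
    case True
    have B: "orb \<tau> k \<in> orbits n \<tau>" using True by (rule orb_in_orbits)
    then have "Min (orb \<tau> k) \<in> orb \<tau> k" using orbitsD(3)[OF p] by blast
    then show ?thesis
      using eq B fixed_vecs_const_on_orb[OF p _ True] a c by metis
  next
    case False
    then show ?thesis using a c unfolding fixed_vecs_def valid_def by simp
  qed
qed

lemma prod_orbits_cbasis:
  assumes "\<tau> permutes {..<n}" "a \<in> fixed_vecs R n \<tau>" "b \<in> fixed_vecs R n \<tau>"
  shows "(\<Prod>B\<in>orbits n \<tau>. cbasis (a (Min B)) (b (Min B))) = tbasis a b"
proof (cases "\<forall>B\<in>orbits n \<tau>. a (Min B) = b (Min B)")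
  case True
  then show ?thesis using fixed_vecs_eqI[OF assms True] by (simp add: cbasis_def tbasis_def)
next
  case False
  then have "a \<noteq> b" by blast
  then show ?thesis using False finite_orbits by (auto simp: cbasis_def tbasis_def)
qed

lemma orbit_vec_Min:
  "\<tau> permutes {..<n} \<Longrightarrow> B \<in> orbits n \<tau> \<Longrightarrow> orbit_vec R n \<tau> y (Min B) = y B"
  unfolding orbit_vec_def using orbitsD(3,4) orbits_eq_orb by metis

lemma orbit_vec_fixed:
  assumes p: "\<tau> permutes {..<n}" and y: "\<forall>B\<in>orbits n \<tau>. y B \<in> irr R" and one: "one R \<in> irr R"
  shows "orbit_vec R n \<tau> y \<in> fixed_vecs R n \<tau>"
proof -
  have "orb \<tau> (\<tau> k) = orb \<tau> k" "\<tau> k < n" if "k < n" for k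
    using orb_eq[OF permutes_lessThan_permutation[OF p] orb_apply[OF orb_self]] permutes_in_image[OF p] that
    by auto
  then show ?thesis
    using y one orb_in_orbits unfolding orbit_vec_def fixed_vecs_def valid_def by auto
qed

section \<open>The fusion ring\<close>

definition in_C :: "'a fusion_ring \<Rightarrow> 'a celem \<Rightarrow> bool" where
  "in_C R x \<longleftrightarrow> (\<forall>c. c \<notin> irr R \<longrightarrow> x c = 0)"

definition cprod_set :: "'a fusion_ring \<Rightarrow> nat set \<Rightarrow> (nat \<Rightarrow> 'a celem) \<Rightarrow> 'a celem" where
  "cprod_set R S f = Finite_Set.fold (\<lambda>i. cmult R (f i)) (cunit R) S"

locale fusion_rules =
  fixes R :: "'a fusion_ring"
  assumes fusion_data: "fusion_data R"
begin

lemma finite_irr: "finite (irr R)"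
  using fusion_data unfolding fusion_data_def by (elim conjE) blast

lemma one_irr: "one R \<in> irr R"
  using fusion_data unfolding fusion_data_def by (elim conjE) blast

lemma dual_irr: "a \<in> irr R \<Longrightarrow> dual R a \<in> irr R"
  using fusion_data unfolding fusion_data_def by (elim conjE) blast

lemma N_nonneg: "0 \<le> N R a b c"
  using fusion_data unfolding fusion_data_def by (elim conjE) blast

lemma N_eq_0_outside: "a \<notin> irr R \<or> b \<notin> irr R \<or> c \<notin> irr R \<Longrightarrow> N R a b c = 0"
  using fusion_data unfolding fusion_data_def by (elim conjE) blast

lemma N_commute: "N R a b c = N R b a c"
  using fusion_data unfolding fusion_data_def by (elim conjE) blast

lemma N_one_left: "a \<in> irr R \<Longrightarrow> c \<in> irr R \<Longrightarrow> N R (one R) a c = (if a = c then 1 else 0)"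
  using fusion_data unfolding fusion_data_def by (elim conjE) blast

lemma N_one_right: "a \<in> irr R \<Longrightarrow> c \<in> irr R \<Longrightarrow> N R a (one R) c = (if a = c then 1 else 0)"
  using N_one_left N_commute by metis

lemma N_assoc:
  "\<lbrakk>a \<in> irr R; b \<in> irr R; c \<in> irr R; d \<in> irr R\<rbrakk> \<Longrightarrow>
     (\<Sum>e\<in>irr R. N R a b e * N R e c d) = (\<Sum>e\<in>irr R. N R b c e * N R a e d)"
  using fusion_data unfolding fusion_data_def by (elim conjE) blast

lemma N_dual_one: "a \<in> irr R \<Longrightarrow> b \<in> irr R \<Longrightarrow> N R a b (one R) = (if b = dual R a then 1 else 0)"
  using fusion_data unfolding fusion_data_def by (elim conjE) blast

lemma cmult_in_C: "in_C R (cmult R x y)"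
  unfolding in_C_def cmult_def using N_eq_0_outside by simp

lemma cunit_in_C: "in_C R (cunit R)"
  unfolding in_C_def cunit_def using one_irr by auto

lemma cbasis_in_C: "a \<in> irr R \<Longrightarrow> in_C R (cbasis a)"
  unfolding in_C_def cbasis_def by auto

lemma cmult_commute: "cmult R x y = cmult R y x"
  unfolding cmult_def by (rule ext, subst sum.swap) (simp add: N_commute mult_ac)

lemma cmult_cbasis_left:
  assumes "a \<in> irr R"
  shows "cmult R (cbasis a) z c = (\<Sum>e\<in>irr R. z e * N R a e c)"
proof -
  have "(\<Sum>e\<in>irr R. cbasis a a' * z e * N R a' e c) = (if a' = a then \<Sum>e\<in>irr R. z e * N R a e c else 0)"
    for a'
    by (simp add: cbasis_def)
  then show ?thesis unfolding cmult_def using assms finite_irr by simp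
qed

lemma cmult_cbasis_cbasis: "a \<in> irr R \<Longrightarrow> b \<in> irr R \<Longrightarrow> cmult R (cbasis a) (cbasis b) = N R a b"
  using cmult_cbasis_left[of a "cbasis b"] finite_irr
  by (simp add: fun_eq_iff cbasis_def if_distrib[of "\<lambda>u. u * _"] cong: if_cong)

lemma cmult_unit_left: "in_C R y \<Longrightarrow> cmult R (cunit R) y = y"
proof (rule ext)
  fix c assume y: "in_C R y"
  show "cmult R (cunit R) y c = y c"
  proof (cases "c \<in> irr R")
    case True
    then show ?thesis
      using finite_irr one_irr y unfolding cunit_eq_cbasis in_C_def
      by (simp add: cmult_cbasis_left N_one_left if_distrib sum.delta' cong: if_cong)
  next
    case False
    then show ?thesis using N_eq_0_outside y unfolding cmult_def in_C_def by simp
  qed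
qed

lemma cmult_unit_right: "in_C R y \<Longrightarrow> cmult R y (cunit R) = y"
  using cmult_unit_left cmult_commute by metis

lemma cmult_assoc: "cmult R (cmult R x y) z = cmult R x (cmult R y z)"
proof (rule ext)
  fix c
  let ?I = "irr R"
  show "cmult R (cmult R x y) z c = cmult R x (cmult R y z) c"
  proof (cases "c \<in> ?I")
    case False
    then show ?thesis unfolding cmult_def using N_eq_0_outside by simp
  next
    case True
    have "cmult R (cmult R x y) z c =
        (\<Sum>e\<in>?I. \<Sum>d\<in>?I. \<Sum>a\<in>?I. \<Sum>b\<in>?I. x a * y b * z d * (N R a b e * N R e d c))"
      unfolding cmult_def by (simp add: sum_distrib_left sum_distrib_right mult_ac)
    also have "\<dots> = (\<Sum>d\<in>?I. \<Sum>a\<in>?I. \<Sum>b\<in>?I. \<Sum>e\<in>?I. x a * y b * z d * (N R a b e * N R e d c))"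
      by (subst sum.swap) (rule sum.cong[OF refl], rule sum_swap_to_inner)
    also have "\<dots> = (\<Sum>a\<in>?I. \<Sum>b\<in>?I. \<Sum>d\<in>?I. x a * y b * z d * (\<Sum>e\<in>?I. N R a b e * N R e d c))"
      by (subst sum_swap_to_inner) (simp add: sum_distrib_left)
    also have "\<dots> = (\<Sum>a\<in>?I. \<Sum>b\<in>?I. \<Sum>d\<in>?I. x a * y b * z d * (\<Sum>e\<in>?I. N R b d e * N R a e c))"
      using N_assoc True by (intro sum.cong refl) simp
    also have "\<dots> = (\<Sum>a\<in>?I. \<Sum>e\<in>?I. \<Sum>b\<in>?I. \<Sum>d\<in>?I. x a * y b * z d * (N R b d e * N R a e c))"
      by (rule sum.cong[OF refl], subst sum_swap_to_inner) (simp add: sum_distrib_left)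
    also have "\<dots> = cmult R x (cmult R y z) c"
      unfolding cmult_def by (simp add: sum_distrib_left sum_distrib_right mult_ac)
    finally show ?thesis .
  qed
qed

lemma cmult_left_commute: "cmult R x (cmult R y z) = cmult R y (cmult R x z)"
  by (metis cmult_assoc cmult_commute)

lemma cmult_nonneg: "(\<And>a. 0 \<le> x a) \<Longrightarrow> (\<And>b. 0 \<le> y b) \<Longrightarrow> 0 \<le> cmult R x y c"
  unfolding cmult_def by (intro sum_nonneg mult_nonneg_nonneg) (simp_all add: N_nonneg)

text \<open>By associativity, a is a summand of (a b) b' with b' dual to b, so a b cannot vanish.\<close>
lemma N_exists_pos: "a \<in> irr R \<Longrightarrow> b \<in> irr R \<Longrightarrow> \<exists>c\<in>irr R. 0 < N R a b c"
proof (rule ccontr)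
  assume a: "a \<in> irr R" and b: "b \<in> irr R" and "\<not> (\<exists>c\<in>irr R. 0 < N R a b c)"
  then have zero: "N R a b c = 0" if "c \<in> irr R" for c
    using that N_nonneg by (meson not_less order_antisym)
  have "1 = N R b (dual R b) (one R) * N R a (one R) a"
    using N_dual_one N_one_right a b dual_irr by simp
  also have "\<dots> \<le> (\<Sum>e\<in>irr R. N R b (dual R b) e * N R a e a)"
    using one_irr finite_irr by (intro member_le_sum) (simp_all add: N_nonneg)
  also have "\<dots> = (\<Sum>e\<in>irr R. N R a b e * N R e (dual R b) a)"
    using N_assoc[OF a b dual_irr[OF b] a] by simp
  also have "\<dots> = 0" using zero by simp
  finally show False by simp
qed

lemma cprod_set_empty [simp]: "cprod_set R {} f = cunit R"
  unfolding cprod_set_def by simp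

lemma cprod_set_insert:
  assumes "finite S" "i \<notin> S"
  shows "cprod_set R (insert i S) f = cmult R (f i) (cprod_set R S f)"
proof -
  interpret comp_fun_commute "\<lambda>i. cmult R (f i)"
    by unfold_locales (simp add: fun_eq_iff cmult_left_commute)
  show ?thesis unfolding cprod_set_def using assms by simp
qed

lemma cprod_set_in_C: "finite S \<Longrightarrow> in_C R (cprod_set R S f)"
  by (induction S rule: finite_induct) (simp_all add: cprod_set_insert cunit_in_C cmult_in_C)

lemma cprod_set_cong: "finite S \<Longrightarrow> (\<And>i. i \<in> S \<Longrightarrow> f i = g i) \<Longrightarrow> cprod_set R S f = cprod_set R S g"
  by (induction S rule: finite_induct) (simp_all add: cprod_set_insert)

lemma cprod_set_union:
  "finite A \<Longrightarrow> finite B \<Longrightarrow> A \<inter> B = {} \<Longrightarrow>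
     cprod_set R (A \<union> B) f = cmult R (cprod_set R A f) (cprod_set R B f)"
  by (induction A rule: finite_induct) (simp_all add: cprod_set_insert cmult_assoc cmult_unit_left cprod_set_in_C)

lemma cprod_set_Union_unit:
  assumes "finite F" "\<forall>A\<in>F. finite A" "disjoint F" "\<forall>A\<in>F. cprod_set R A f = cunit R"
  shows "cprod_set R (\<Union>F) f = cunit R"
  using assms
proof (induction F rule: finite_induct)
  case (insert A F)
  have "A \<inter> \<Union>F = {}" using insert by (auto simp: disjoint_def)
  moreover have "disjoint F" using insert.prems(2) by (rule pairwise_subset) auto
  ultimately show ?case
    using insert by (simp add: cprod_set_union cmult_unit_left cunit_in_C)
qed simp

lemma cprod_set_mult:
  "finite S \<Longrightarrow> cprod_set R S (\<lambda>i. cmult R (f i) (g i)) = cmult R (cprod_set R S f) (cprod_set R S g)"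
  by (induction S rule: finite_induct)
    (simp_all add: cprod_set_insert cmult_unit_left cunit_in_C cmult_assoc cmult_left_commute)

lemma cprod_set_unit: "finite S \<Longrightarrow> cprod_set R S (\<lambda>_. cunit R) = cunit R"
  by (induction S rule: finite_induct) (simp_all add: cprod_set_insert cmult_unit_left cunit_in_C)

lemma cprod_list_eq_cprod_set:
  "distinct L \<Longrightarrow> cprod_list R (map v L) = cprod_set R (set L) (\<lambda>k. cbasis (v k))"
  by (induction L) (simp_all add: cprod_list_def cprod_set_insert)

lemma cprod_set_nonneg: "finite S \<Longrightarrow> (\<And>i y. i \<in> S \<Longrightarrow> 0 \<le> f i y) \<Longrightarrow> 0 \<le> cprod_set R S f c"
  by (induction S arbitrary: c rule: finite_induct)
    (simp_all add: cprod_set_insert cmult_nonneg cunit_def)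

lemma cprod_set_cbasis_nonneg: "finite S \<Longrightarrow> 0 \<le> cprod_set R S (\<lambda>k. cbasis (v k)) c"
  by (rule cprod_set_nonneg) (simp_all add: cbasis_def)

lemma cprod_set_cbasis_pos:
  "finite S \<Longrightarrow> (\<And>i. i \<in> S \<Longrightarrow> v i \<in> irr R) \<Longrightarrow> \<exists>y\<in>irr R. 0 < cprod_set R S (\<lambda>k. cbasis (v k)) y"
proof (induction S rule: finite_induct)
  case empty
  then show ?case using one_irr by (auto simp: cunit_def)
next
  case (insert i S)
  let ?P = "cprod_set R S (\<lambda>k. cbasis (v k))"
  obtain e where e: "e \<in> irr R" "0 < ?P e" using insert by auto
  obtain y where y: "y \<in> irr R" "0 < N R (v i) e y" using N_exists_pos insert.prems e by blast
  have "0 < ?P e * N R (v i) e y" using e y by simp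
  also have "\<dots> \<le> (\<Sum>e'\<in>irr R. ?P e' * N R (v i) e' y)"
    using e finite_irr insert.hyps(1)
    by (intro member_le_sum mult_nonneg_nonneg cprod_set_cbasis_nonneg N_nonneg) auto
  also have "\<dots> = cprod_set R (insert i S) (\<lambda>k. cbasis (v k)) y"
    using insert by (simp add: cprod_set_insert cmult_cbasis_left)
  finally show ?case using y by blast
qed

lemma cprod_set_expand:
  "finite S \<Longrightarrow> (\<forall>i\<in>S. in_C R (g i)) \<Longrightarrow>
     cprod_set R S g y = (\<Sum>c\<in>PiE S (\<lambda>_. irr R). (\<Prod>i\<in>S. g i (c i)) * cprod_set R S (\<lambda>k. cbasis (c k)) y)"
proof (induction S arbitrary: y rule: finite_induct)
  case (insert x S)
  let ?I = "irr R" and ?PiS = "PiE S (\<lambda>_. irr R)"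
  let ?B = "\<lambda>c. cprod_set R S (\<lambda>k. cbasis (c k))"
  have IH: "cprod_set R S g e = (\<Sum>c\<in>?PiS. (\<Prod>i\<in>S. g i (c i)) * ?B c e)" for e
    using insert by simp
  have "cprod_set R (insert x S) g y = (\<Sum>a\<in>?I. \<Sum>e\<in>?I. g x a * cprod_set R S g e * N R a e y)"
    using insert.hyps by (simp add: cprod_set_insert cmult_def)
  also have "\<dots> = (\<Sum>a\<in>?I. \<Sum>c\<in>?PiS. g x a * (\<Prod>i\<in>S. g i (c i)) * cmult R (cbasis a) (?B c) y)"
    by (intro sum.cong refl)
      (simp add: IH cmult_cbasis_left sum_distrib_left sum_distrib_right mult_ac sum.swap[of _ ?I ?PiS])
  also have "\<dots> = (\<Sum>(a, c)\<in>?I \<times> ?PiS. g x a * (\<Prod>i\<in>S. g i (c i)) * cmult R (cbasis a) (?B c) y)"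
    by (rule sum.cartesian_product)
  also have "\<dots> = (\<Sum>c\<in>PiE (insert x S) (\<lambda>_. ?I).
      (\<Prod>i\<in>insert x S. g i (c i)) * cprod_set R (insert x S) (\<lambda>k. cbasis (c k)) y)"
  proof (rule sum.reindex_bij_witness[of _ "\<lambda>c. (c x, c(x := undefined))" "\<lambda>(a, c). c(x := a)"])
    fix ac assume ac: "ac \<in> ?I \<times> ?PiS"
    then obtain a c where ac_eq: "ac = (a, c)" and a: "a \<in> ?I" and c: "c \<in> ?PiS" by blast
    have "c x = undefined" using c insert.hyps(2) by (auto simp: PiE_def extensional_def)
    then show "(\<lambda>c. (c x, c(x := undefined))) (case ac of (a, c) \<Rightarrow> c(x := a)) = ac"
      by (simp add: ac_eq fun_eq_iff)
    show "(case ac of (a, c) \<Rightarrow> c(x := a)) \<in> PiE (insert x S) (\<lambda>_. ?I)"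
      using a c by (simp add: ac_eq PiE_fun_upd)
    have "(\<Prod>i\<in>S. g i ((c(x := a)) i)) = (\<Prod>i\<in>S. g i (c i))"
      "?B (c(x := a)) = ?B c"
      using insert.hyps by (auto intro!: prod.cong cprod_set_cong)
    then show "(\<Prod>i\<in>insert x S. g i ((case ac of (a, c) \<Rightarrow> c(x := a)) i)) *
        cprod_set R (insert x S) (\<lambda>k. cbasis ((case ac of (a, c) \<Rightarrow> c(x := a)) k)) y =
      (case ac of (a, c) \<Rightarrow> g x a * (\<Prod>i\<in>S. g i (c i)) * cmult R (cbasis a) (?B c) y)"
      using insert.hyps by (simp add: ac_eq cprod_set_insert)
  next
    fix c assume c: "c \<in> PiE (insert x S) (\<lambda>_. ?I)"
    then show "(case (c x, c(x := undefined)) of (a, c) \<Rightarrow> c(x := a)) = c" by simp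
    show "(c x, c(x := undefined)) \<in> ?I \<times> ?PiS"
      using c insert.hyps(2) by (auto intro: fun_upd_in_PiE PiE_mem)
  qed
  finally show ?case .
qed simp

lemma cprod_set_invariant_unit:
  assumes p: "\<rho> permutes {..<n}" and S: "S \<subseteq> {..<n}" "\<forall>x\<in>S. \<rho> x \<in> S"
    and units: "\<forall>B\<in>orbits n \<rho>. cprod_set R B f = cunit R"
  shows "cprod_set R S f = cunit R"
proof -
  have "(\<rho> ^^ j) x \<in> S" if "x \<in> S" for x j
    using that S(2) by (induction j) auto
  then have orb_sub: "orb \<rho> x \<subseteq> S" if "x \<in> S" for x
    using that unfolding orb_def by blast
  have "orb \<rho> ` S \<subseteq> orbits n \<rho>" using S(1) orb_in_orbits by blast
  moreover have "\<Union>(orb \<rho> ` S) = S" using orb_sub orb_self by blast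
  moreover have "disjoint (orb \<rho> ` S)"
    using pairwise_subset[OF partition_onD2[OF partition_on_orbits[OF p]]] calculation(1) .
  moreover have "finite (orb \<rho> ` S)" using finite_subset[OF S(1)] by simp
  ultimately show ?thesis
    using cprod_set_Union_unit[of "orb \<rho> ` S" f] units orbitsD(1)[OF p] by auto
qed

section \<open>Confinement\<close>

lemma one_vec_valid: "one_vec R \<in> valid R n"
  unfolding one_vec_def valid_def using one_irr by simp

lemma one_vec_fixed: "one_vec R \<in> fixed_vecs R n \<tau>"
  unfolding fixed_vecs_def using one_vec_valid by (simp add: one_vec_def)

lemma finite_valid: "finite (valid R n)"
proof -
  let ?ext = "\<lambda>c i. if i < n then c i else one R"
  have "valid R n \<subseteq> ?ext ` PiE {..<n} (\<lambda>_. irr R)"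
  proof
    fix v assume v: "v \<in> valid R n"
    then have "v = ?ext (restrict v {..<n})" unfolding valid_def by (auto simp: fun_eq_iff)
    moreover have "restrict v {..<n} \<in> PiE {..<n} (\<lambda>_. irr R)" using v unfolding valid_def by auto
    ultimately show "v \<in> ?ext ` PiE {..<n} (\<lambda>_. irr R)" by blast
  qed
  then show ?thesis using finite_irr by (meson finite_PiE finite_imageI finite_lessThan finite_subset)
qed

lemma finite_fixed_vecs: "finite (fixed_vecs R n \<tau>)"
  using finite_valid unfolding fixed_vecs_def by simp

lemma rmult_tunit_right:
  assumes p: "\<tau> permutes {..<n}" and r: "\<And>a. a \<notin> fixed_vecs R n \<tau> \<Longrightarrow> r a = 0"
  shows "rmult R n \<tau> r (tunit R) = r"
proof
  fix c
  show "rmult R n \<tau> r (tunit R) c = r c"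
  proof (cases "c \<in> fixed_vecs R n \<tau>")
    case True
    have "N R (a (Min B)) (one R) (c (Min B)) = cbasis (a (Min B)) (c (Min B))"
      if "a \<in> fixed_vecs R n \<tau>" "B \<in> orbits n \<tau>" for a B
    proof -
      have "a (Min B) \<in> irr R" "c (Min B) \<in> irr R"
        using that True orbitsD(4)[OF p] valid_irr fixed_vecs_valid by blast+
      then show ?thesis by (simp add: N_one_right cbasis_def)
    qed
    then have "rmult R n \<tau> r (tunit R) c = (\<Sum>a\<in>fixed_vecs R n \<tau>. r a * tbasis a c)"
      using True finite_fixed_vecs one_vec_fixed prod_orbits_cbasis[OF p _ True]
      by (simp add: rmult_def tunit_eq_tbasis tbasis_def one_vec_def if_distrib[of "\<lambda>u. _ * u * _"]
          cong: if_cong)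
    also have "\<dots> = r c"
      using True finite_fixed_vecs by (simp add: tbasis_def if_distrib[of "\<lambda>u. _ * u"] cong: if_cong)
    finally show ?thesis .
  qed (simp add: rmult_def r)
qed

lemma act_bare: "\<tau> permutes {..<n} \<Longrightarrow> act R n d (bare R \<tau>) = (\<tau>, conf R n \<tau> d)"
  unfolding act_def bare_def runit_def by (simp add: rmult_tunit_right conf_def)

lemma conf_eq:
  assumes "\<tau> permutes {..<n}" "b \<in> fixed_vecs R n \<tau>"
  shows "conf R n \<tau> x b =
    (\<Sum>a\<in>valid R n. x a * (\<Prod>B\<in>orbits n \<tau>. cprod_set R B (\<lambda>k. cbasis (a k)) (b (Min B))))"
proof -
  have "cprod_list R (map a (sorted_list_of_set B)) = cprod_set R B (\<lambda>k. cbasis (a k))"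
    if "B \<in> orbits n \<tau>" for a B
    using orbitsD(1)[OF assms(1) that] by (simp add: cprod_list_eq_cprod_set)
  then show ?thesis unfolding conf_def using assms(2) by (simp cong: prod.cong)
qed

lemma bij_betw_valid_blocks:
  assumes P: "partition_on {..<n} P"
  shows "bij_betw (\<lambda>c. \<lambda>B\<in>P. restrict c B) (valid R n) (PiE P (\<lambda>B. PiE B (\<lambda>_. irr R)))"
proof -
  have sub: "B \<subseteq> {..<n}" if "B \<in> P" for B using partition_onD1[OF P] that by blast
  obtain \<beta> where \<beta>: "\<forall>i\<in>{..<n}. \<beta> i \<in> P \<and> i \<in> \<beta> i"
    and \<beta>_unique: "\<And>B i. B \<in> P \<Longrightarrow> i \<in> B \<Longrightarrow> \<beta> i = B"
    using partition_on_block_fun[OF P] by blast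
  let ?glue = "\<lambda>p k. if k < n then p (\<beta> k) k else one R"
  show ?thesis
  proof (rule bij_betw_byWitness[where f' = ?glue])
    show "\<forall>c\<in>valid R n. ?glue (\<lambda>B\<in>P. restrict c B) = c"
      using \<beta> unfolding valid_def by auto
    show "(\<lambda>c. \<lambda>B\<in>P. restrict c B) ` valid R n \<subseteq> PiE P (\<lambda>B. PiE B (\<lambda>_. irr R))"
    proof (rule image_subsetI)
      fix c assume c: "c \<in> valid R n"
      have "restrict c B \<in> PiE B (\<lambda>_. irr R)" if "B \<in> P" for B
        using sub[OF that] c unfolding valid_def by auto
      then show "(\<lambda>B\<in>P. restrict c B) \<in> PiE P (\<lambda>B. PiE B (\<lambda>_. irr R))" by simp
    qed
    show "?glue ` PiE P (\<lambda>B. PiE B (\<lambda>_. irr R)) \<subseteq> valid R n"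
      using \<beta> one_irr unfolding valid_def by fastforce
    show "\<forall>p\<in>PiE P (\<lambda>B. PiE B (\<lambda>_. irr R)). (\<lambda>B\<in>P. restrict (?glue p) B) = p"
    proof (intro ballI ext)
      fix p B i assume p: "p \<in> PiE P (\<lambda>B. PiE B (\<lambda>_. irr R))"
      show "(\<lambda>B\<in>P. restrict (?glue p) B) B i = p B i"
      proof (cases "B \<in> P")
        case True
        show ?thesis
        proof (cases "i \<in> B")
          case i: True
          then have "i < n" "\<beta> i = B" using sub[OF True] \<beta>_unique[OF True] by auto
          then show ?thesis using True i by simp
        qed (simp add: True PiE_arb[OF PiE_mem[OF p True]])
      qed (simp add: PiE_arb[OF p])
    qed
  qed
qed

text \<open>Expanding each block product in the basis of simples and collecting the choices over
  all blocks gives a sum over the multilayer anyons.\<close>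

lemma sum_valid_prod_cprod_blocks:
  assumes P: "partition_on {..<n} P" and g: "\<forall>i<n. in_C R (g i)"
  shows "(\<Sum>c\<in>valid R n. (\<Prod>i<n. g i (c i)) * (\<Prod>B\<in>P. cprod_set R B (\<lambda>k. cbasis (c k)) (y B)))
       = (\<Prod>B\<in>P. cprod_set R B g (y B))"
proof -
  define h where "h B c = (\<Prod>i\<in>B. g i (c i)) * cprod_set R B (\<lambda>k. cbasis (c k)) (y B)" for B c
  have sub: "B \<subseteq> {..<n}" if "B \<in> P" for B using partition_onD1[OF P] that by blast
  have finB: "finite B" if "B \<in> P" for B using sub[OF that] by (rule finite_subset) simp
  have finP: "finite P" using finite_elements[OF _ P] by simp
  have "(\<Prod>B\<in>P. cprod_set R B g (y B)) = (\<Prod>B\<in>P. \<Sum>c\<in>PiE B (\<lambda>_. irr R). h B c)"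
    unfolding h_def using g sub finB by (intro prod.cong refl cprod_set_expand) auto
  also have "\<dots> = (\<Sum>p\<in>PiE P (\<lambda>B. PiE B (\<lambda>_. irr R)). \<Prod>B\<in>P. h B (p B))"
    using finP finB finite_irr by (intro prod_sum_PiE) (auto intro: finite_PiE)
  also have "\<dots> = (\<Sum>c\<in>valid R n. \<Prod>B\<in>P. h B (restrict c B))"
    using sum.reindex_bij_betw[OF bij_betw_valid_blocks[OF P], of "\<lambda>p. \<Prod>B\<in>P. h B (p B)"]
    by simp
  also have "\<dots> = (\<Sum>c\<in>valid R n. (\<Prod>B\<in>P. \<Prod>i\<in>B. g i (c i)) *
      (\<Prod>B\<in>P. cprod_set R B (\<lambda>k. cbasis (c k)) (y B)))"
  proof (rule sum.cong[OF refl])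
    fix c
    have "h B (restrict c B) = (\<Prod>i\<in>B. g i (c i)) * cprod_set R B (\<lambda>k. cbasis (c k)) (y B)"
      if "B \<in> P" for B
      using cprod_set_cong[OF finB[OF that], of "\<lambda>k. cbasis (restrict c B k)" "\<lambda>k. cbasis (c k)"]
      unfolding h_def by simp
    then show "(\<Prod>B\<in>P. h B (restrict c B)) = (\<Prod>B\<in>P. \<Prod>i\<in>B. g i (c i)) *
      (\<Prod>B\<in>P. cprod_set R B (\<lambda>k. cbasis (c k)) (y B))"
      by (simp add: prod.distrib)
  qed
  also have "\<dots> = (\<Sum>c\<in>valid R n. (\<Prod>i<n. g i (c i)) *
      (\<Prod>B\<in>P. cprod_set R B (\<lambda>k. cbasis (c k)) (y B)))"
    using prod.Union_disjoint[of P "\<lambda>i. g i (c i)" for c] finP finB partition_onD1[OF P]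
      partition_onD2[OF P] unfolding disjoint_def by (simp add: comp_def)
  finally show ?thesis by simp
qed

lemma conf_tensor:
  assumes "\<tau> permutes {..<n}" "\<forall>i<n. in_C R (g i)" "b \<in> fixed_vecs R n \<tau>"
  shows "conf R n \<tau> (tensor R n g) b = (\<Prod>B\<in>orbits n \<tau>. cprod_set R B g (b (Min B)))"
  unfolding conf_eq[OF assms(1,3)] tensor_def
  using sum_valid_prod_cprod_blocks[OF partition_on_orbits[OF assms(1)] assms(2)]
  by (simp cong: sum.cong)

lemma tmult_tbasis:
  assumes "v \<in> valid R n" "w \<in> valid R n"
  shows "tmult R n (tbasis v) (tbasis w) = tensor R n (\<lambda>i. cmult R (cbasis (v i)) (cbasis (w i)))"
proof -
  have "(\<Prod>i<n. N R (v i) (w i) (c i)) = (\<Prod>i<n. cmult R (cbasis (v i)) (cbasis (w i)) (c i))" for c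
    using valid_irr[OF assms(1)] valid_irr[OF assms(2)]
    by (intro prod.cong refl) (simp add: cmult_cbasis_cbasis)
  then show ?thesis
    using assms finite_valid unfolding tmult_def tensor_def by (intro ext) (simp add: sum_sum_tbasis_mult)
qed

lemma tmult_tunit_right:
  assumes "telem R n x"
  shows "tmult R n x (tunit R) = x"
proof
  fix c
  show "tmult R n x (tunit R) c = x c"
  proof (cases "c \<in> valid R n")
    case True
    have "(\<Prod>i<n. N R (a i) (one R) (c i)) = tbasis a c" if "a \<in> valid R n" for a
    proof -
      have "(\<Prod>i<n. N R (a i) (one R) (c i)) = (\<Prod>i<n. if a i = c i then 1 else 0)"
        using that True by (intro prod.cong refl) (simp add: N_one_right valid_irr)
      also have "\<dots> = tbasis a c"
        using that True unfolding valid_def tbasis_def by (auto simp: fun_eq_iff) (metis lessThan_iff not_le)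
      finally show ?thesis .
    qed
    then have "tmult R n x (tunit R) c = (\<Sum>a\<in>valid R n. x a * tbasis a c)"
      using True finite_valid one_vec_valid
      by (simp add: tmult_def tunit_eq_tbasis sum_sum_mult_tbasis one_vec_def)
    then show ?thesis
      using True finite_valid by (simp add: tbasis_def if_distrib[of "\<lambda>u. _ * u"] cong: if_cong)
  qed (use assms in \<open>simp add: tmult_def telem_def\<close>)
qed

section \<open>Deconfinements\<close>

lemma conf_tbasis:
  assumes "\<tau> permutes {..<n}" "v \<in> valid R n" "b \<in> fixed_vecs R n \<tau>"
  shows "conf R n \<tau> (tbasis v) b = (\<Prod>B\<in>orbits n \<tau>. cprod_set R B (\<lambda>k. cbasis (v k)) (b (Min B)))"
  using conf_eq[OF assms(1,3)] assms(2) finite_valid by (simp add: sum_tbasis_mult)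

lemma deconf_exists:
  assumes p: "\<tau> permutes {..<n}" and a: "a \<in> fixed_vecs R n \<tau>"
  shows "\<exists>d. is_deconf R n \<tau> a d"
proof -
  define u where "u k = (if k < n \<and> k = Min (orb \<tau> k) then a k else one R)" for k
  have u: "u \<in> valid R n"
    using fixed_vecs_valid[OF a] one_irr unfolding u_def valid_def by auto
  have block: "cprod_set R B (\<lambda>k. cbasis (u k)) = cbasis (a (Min B))" if B: "B \<in> orbits n \<tau>" for B
  proof -
    note B' = orbitsD[OF p B]
    have "cprod_set R (B - {Min B}) (\<lambda>k. cbasis (u k)) = cprod_set R (B - {Min B}) (\<lambda>_. cunit R)"
      using B' orbits_eq_orb[OF p B] by (intro cprod_set_cong) (auto simp: u_def cunit_eq_cbasis)
    moreover have "cprod_set R B (\<lambda>k. cbasis (u k))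
        = cmult R (cbasis (u (Min B))) (cprod_set R (B - {Min B}) (\<lambda>k. cbasis (u k)))"
      using cprod_set_insert[of "B - {Min B}" "Min B"] B'(1,3) by (simp add: insert_absorb)
    moreover have "u (Min B) = a (Min B)" "a (Min B) \<in> irr R"
      using B' orbits_eq_orb[OF p B] valid_irr[OF fixed_vecs_valid[OF a]] by (auto simp: u_def)
    ultimately show ?thesis
      using B'(1) by (simp add: cprod_set_unit cmult_unit_right cbasis_in_C)
  qed
  have "conf R n \<tau> (tbasis u) b = tbasis a b" for b
  proof (cases "b \<in> fixed_vecs R n \<tau>")
    case True
    then show ?thesis using conf_tbasis[OF p u True] block prod_orbits_cbasis[OF p a True] by simp
  next
    case False
    then show ?thesis using a by (auto simp: conf_def tbasis_def)
  qed
  then have "is_deconf R n \<tau> a (tbasis u)"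
    using u act_bare[OF p] unfolding is_deconf_def telem_def tbasis_def by auto
  then show ?thesis by blast
qed

text \<open>A positive coefficient of the product along one orbit at a label other than the vacuum
  extends, by positive coefficients on the other orbits, to an orbit-constant anyon other than
  the vacuum with positive coefficient in the confinement.\<close>
lemma cprod_orbits_unit_if_conf_le_vacuum:
  assumes p: "\<tau> permutes {..<n}" and v: "v \<in> valid R n"
    and le: "\<And>b. b \<in> fixed_vecs R n \<tau> \<Longrightarrow> conf R n \<tau> (tbasis v) b \<le> tbasis (one_vec R) b"
  shows "\<forall>B\<in>orbits n \<tau>. cprod_set R B (\<lambda>k. cbasis (v k)) = cunit R"
proof -
  let ?P = "\<lambda>B. cprod_set R B (\<lambda>k. cbasis (v k))"
  have P_nonneg: "0 \<le> ?P B y" if "B \<in> orbits n \<tau>" for B y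
    using orbitsD(1)[OF p that] by (rule cprod_set_cbasis_nonneg)
  have "\<exists>y\<in>irr R. 0 < ?P B y" if "B \<in> orbits n \<tau>" for B
    using orbitsD(1,2)[OF p that] valid_irr[OF v] by (intro cprod_set_cbasis_pos) auto
  then obtain y where y: "\<forall>B\<in>orbits n \<tau>. y B \<in> irr R \<and> 0 < ?P B (y B)" by metis
  have vacuum: "y0 = one R" if B0: "B0 \<in> orbits n \<tau>" "y0 \<in> irr R" "0 < ?P B0 y0" for B0 y0
  proof -
    let ?y = "y(B0 := y0)"
    let ?b = "orbit_vec R n \<tau> ?y"
    have b: "?b \<in> fixed_vecs R n \<tau>" using orbit_vec_fixed[OF p _ one_irr] y B0 by simp
    have "0 < conf R n \<tau> (tbasis v) ?b" unfolding conf_tbasis[OF p v b]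
    proof (rule prod_pos)
      fix B assume B: "B \<in> orbits n \<tau>"
      have "?b (Min B) = ?y B" by (rule orbit_vec_Min[OF p B])
      then show "0 < ?P B (?b (Min B))" using y B0 B by (cases "B = B0") auto
    qed
    then have "?b = one_vec R" using le[OF b] by (simp add: tbasis_def split: if_splits)
    then show ?thesis using orbit_vec_Min[OF p B0(1), of R ?y] by (simp add: one_vec_def)
  qed
  have P_other: "?P B c = 0" if "B \<in> orbits n \<tau>" "c \<noteq> one R" for B c
  proof (cases "c \<in> irr R")
    case True
    then show ?thesis using vacuum[OF that(1) True] P_nonneg[OF that(1), of c] that(2) by linarith
  qed (use cprod_set_in_C[OF orbitsD(1)[OF p that(1)]] in \<open>auto simp: in_C_def\<close>)
  have P_one: "1 \<le> ?P B (one R)" if "B \<in> orbits n \<tau>" for B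
    using y vacuum that by fastforce
  have "(\<Prod>B\<in>orbits n \<tau>. ?P B (one R)) \<le> 1"
    using le[OF one_vec_fixed] conf_tbasis[OF p v one_vec_fixed] by (simp add: tbasis_def one_vec_def)
  then have "?P B (one R) = 1" if "B \<in> orbits n \<tau>" for B
    using int_prod_ge_1_le_1[OF finite_orbits, where f = "\<lambda>B. ?P B (one R)"] P_one that by blast
  then show ?thesis using P_other by (auto simp: fun_eq_iff cunit_def)
qed

lemma deconf_one:
  assumes p: "\<tau> permutes {..<n}" and d: "is_deconf R n \<tau> (one_vec R) d"
  shows "\<exists>v\<in>valid R n. d = tbasis v \<and> (\<forall>B\<in>orbits n \<tau>. cprod_set R B (\<lambda>k. cbasis (v k)) = cunit R)"
proof -
  let ?C = "\<lambda>v. conf R n \<tau> (tbasis v)"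
  have nonneg: "\<And>v. 0 \<le> d v" and out: "\<And>v. v \<notin> valid R n \<Longrightarrow> d v = 0"
    and conf_d: "conf R n \<tau> d = tbasis (one_vec R)"
    using d act_bare[OF p] unfolding is_deconf_def telem_def by auto
  have conf_d_eq: "(\<Sum>v\<in>valid R n. d v * ?C v b) = tbasis (one_vec R) b" if "b \<in> fixed_vecs R n \<tau>" for b
    using conf_eq[OF p that, of d] conf_d by (simp add: conf_tbasis[OF p _ that] cong: sum.cong)
  have C_nonneg: "0 \<le> ?C v b" if "v \<in> valid R n" "b \<in> fixed_vecs R n \<tau>" for v b
    unfolding conf_tbasis[OF p that] using orbitsD(1)[OF p] cprod_set_cbasis_nonneg by (simp add: prod_nonneg)
  have units: "\<forall>B\<in>orbits n \<tau>. cprod_set R B (\<lambda>k. cbasis (v k)) = cunit R"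
    if v: "v \<in> valid R n" "d v \<noteq> 0" for v
  proof (rule cprod_orbits_unit_if_conf_le_vacuum[OF p v(1)])
    fix b assume b: "b \<in> fixed_vecs R n \<tau>"
    have "?C v b \<le> d v * ?C v b" using nonneg[of v] v(2) C_nonneg[OF v(1) b] by (simp add: mult_le_cancel_right1)
    also have "\<dots> \<le> tbasis (one_vec R) b"
      using member_le_sum[of v "valid R n" "\<lambda>v. d v * ?C v b"] v(1) finite_valid nonneg C_nonneg b
        conf_d_eq[OF b] by simp
    finally show "?C v b \<le> tbasis (one_vec R) b" .
  qed
  have "d v = d v * ?C v (one_vec R)" if "v \<in> valid R n" for v
    using units[OF that] conf_tbasis[OF p that one_vec_fixed]
    by (cases "d v = 0") (simp_all add: cunit_def one_vec_def)
  then have "sum d (valid R n) = (\<Sum>v\<in>valid R n. d v * ?C v (one_vec R))"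
    by (rule sum.cong[OF refl])
  also have "\<dots> = 1" using conf_d_eq[OF one_vec_fixed] by (simp add: tbasis_def)
  finally obtain v where v: "v \<in> valid R n" "d = (\<lambda>x. if x = v then 1 else 0)"
    using int_nonneg_sum_eq_1_imp_delta[of "valid R n" d, OF finite_valid nonneg out] by blast
  moreover have "d = tbasis v" using v(2) by (simp add: tbasis_def)
  ultimately show ?thesis using units[of v] by (intro bexI[of _ v]) simp_all
qed

lemma conf_tmult_tbasis_unit:
  assumes p\<rho>: "\<rho> permutes {..<n}" and p\<sigma>: "\<sigma> permutes {..<n}"
    and refine: "\<And>x. \<rho> x \<in> orb (\<rho> \<circ> \<sigma>) x"
    and v: "v \<in> valid R n" "\<forall>B\<in>orbits n \<rho>. cprod_set R B (\<lambda>k. cbasis (v k)) = cunit R"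
    and w: "w \<in> valid R n" "\<forall>B\<in>orbits n \<sigma>. cprod_set R B (\<lambda>k. cbasis (w k)) = cunit R"
  shows "conf R n (\<rho> \<circ> \<sigma>) (tmult R n (tbasis v) (tbasis w)) = tunit R"
proof
  fix b
  let ?\<pi> = "\<rho> \<circ> \<sigma>" and ?g = "\<lambda>i. cmult R (cbasis (v i)) (cbasis (w i))"
  have p\<pi>: "?\<pi> permutes {..<n}" by (rule permutes_compose[OF p\<sigma> p\<rho>])
  have perm: "permutation ?\<pi>" by (rule permutes_lessThan_permutation[OF p\<pi>])
  have blocks: "cprod_set R B ?g = cunit R" if B: "B \<in> orbits n ?\<pi>" for B
  proof -
    obtain k where k: "B = orb ?\<pi> k" using B unfolding orbits_def by blast
    have "\<forall>x\<in>B. \<rho> x \<in> B" "\<forall>x\<in>B. \<sigma> x \<in> B"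
      using k orb_closed[OF perm refine] orb_closed[OF perm orb_comp_closed_right[OF perm refine]] by auto
    then show ?thesis
      using orbitsD(1,2)[OF p\<pi> B] cprod_set_invariant_unit[OF p\<rho>] cprod_set_invariant_unit[OF p\<sigma>] v(2) w(2)
      by (simp add: cprod_set_mult cmult_unit_left cunit_in_C)
  qed
  show "conf R n ?\<pi> (tmult R n (tbasis v) (tbasis w)) b = tunit R b"
  proof (cases "b \<in> fixed_vecs R n ?\<pi>")
    case True
    have "conf R n ?\<pi> (tmult R n (tbasis v) (tbasis w)) b = (\<Prod>B\<in>orbits n ?\<pi>. cprod_set R B ?g (b (Min B)))"
      unfolding tmult_tbasis[OF v(1) w(1)] using cmult_in_C by (intro conf_tensor[OF p\<pi> _ True]) blast
    also have "\<dots> = (\<Prod>B\<in>orbits n ?\<pi>. cbasis (one_vec R (Min B)) (b (Min B)))"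
      using blocks by (simp add: cunit_eq_cbasis one_vec_def)
    also have "\<dots> = tunit R b" using prod_orbits_cbasis[OF p\<pi> one_vec_fixed True] by (simp add: tunit_eq_tbasis)
    finally show ?thesis .
  next
    case False
    then show ?thesis using one_vec_fixed by (auto simp: conf_def tunit_eq_tbasis tbasis_def)
  qed
qed

section \<open>Fusion of bare defects\<close>

lemma fus_basis_out_exists:
  assumes "\<rho> permutes {..<n}" "\<sigma> permutes {..<n}" "a \<in> fixed_vecs R n \<rho>" "b \<in> fixed_vecs R n \<sigma>"
  shows "\<exists>z. fus_basis_out R n \<rho> a \<sigma> b z"
  using cycle_decomp_exists[OF assms(1)] deconf_exists[OF assms(1,3)] deconf_exists[OF assms(2,4)]
  unfolding fus_basis_out_def by blast

lemma fus_basis_out_one: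
  assumes p\<rho>: "\<rho> permutes {..<n}" and p\<sigma>: "\<sigma> permutes {..<n}"
    and F: "\<And>cs. is_cycle_decomp n \<rho> cs \<Longrightarrow> Fcomp R n (transp_list cs) \<sigma> = tunit R"
    and refine: "\<And>x. \<rho> x \<in> orb (\<rho> \<circ> \<sigma>) x"
    and z: "fus_basis_out R n \<rho> (one_vec R) \<sigma> (one_vec R) z"
  shows "z = bare R (\<rho> \<circ> \<sigma>)"
proof -
  obtain cs d1 d2 where cs: "is_cycle_decomp n \<rho> cs"
    and d: "is_deconf R n \<rho> (one_vec R) d1" "is_deconf R n \<sigma> (one_vec R) d2"
    and z_eq: "z = act R n (tmult R n (tmult R n d1 d2) (Fcomp R n (transp_list cs) \<sigma>)) (bare R (\<rho> \<circ> \<sigma>))"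
    using z unfolding fus_basis_out_def by blast
  obtain v w where v: "v \<in> valid R n" "d1 = tbasis v" "\<forall>B\<in>orbits n \<rho>. cprod_set R B (\<lambda>k. cbasis (v k)) = cunit R"
    and w: "w \<in> valid R n" "d2 = tbasis w" "\<forall>B\<in>orbits n \<sigma>. cprod_set R B (\<lambda>k. cbasis (w k)) = cunit R"
    using deconf_one[OF p\<rho> d(1)] deconf_one[OF p\<sigma> d(2)] by blast
  have "telem R n (tmult R n d1 d2)" unfolding telem_def tmult_def by simp
  then have "z = (\<rho> \<circ> \<sigma>, conf R n (\<rho> \<circ> \<sigma>) (tmult R n (tbasis v) (tbasis w)))"
    using z_eq F[OF cs] act_bare[OF permutes_compose[OF p\<sigma> p\<rho>]] v(2) w(2) by (simp add: tmult_tunit_right)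
  then show ?thesis
    using conf_tmult_tbasis_unit[OF p\<rho> p\<sigma> refine v(1,3) w(1,3)] by (simp add: bare_def runit_def)
qed

lemma fus_rel_bare_iff:
  "fus_rel R n (bare R \<rho>) (bare R \<sigma>) z \<longleftrightarrow>
     (\<exists>ch. (\<forall>a\<in>fixed_vecs R n \<rho>. \<forall>b\<in>fixed_vecs R n \<sigma>. fus_basis_out R n \<rho> a \<sigma> b (\<rho> \<circ> \<sigma>, ch a b))
       \<and> z = (\<rho> \<circ> \<sigma>, ch (one_vec R) (one_vec R)))"
proof -
  have collapse: "(\<lambda>c. \<Sum>a\<in>fixed_vecs R n \<rho>. \<Sum>b\<in>fixed_vecs R n \<sigma>. tunit R a * tunit R b * ch a b c)
      = ch (one_vec R) (one_vec R)" for ch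
    by (simp add: tunit_eq_tbasis sum_sum_tbasis_mult finite_fixed_vecs one_vec_fixed)
  show ?thesis unfolding fus_rel_def by (simp add: bare_def runit_def collapse)
qed

text \<open>Only the pair of vacuum labels contributes to the fusion of bare defects, and for it every
  admissible choice of deconfinements and cycle decomposition yields the bare defect.\<close>
lemma fus_rel_bare:
  assumes p\<rho>: "\<rho> permutes {..<n}" and p\<sigma>: "\<sigma> permutes {..<n}"
    and F: "\<And>cs. is_cycle_decomp n \<rho> cs \<Longrightarrow> Fcomp R n (transp_list cs) \<sigma> = tunit R"
    and refine: "\<And>x. \<rho> x \<in> orb (\<rho> \<circ> \<sigma>) x"
  shows "{z. fus_rel R n (bare R \<rho>) (bare R \<sigma>) z} = {bare R (\<rho> \<circ> \<sigma>)}"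
proof -
  let ?one = "one_vec R"
  define ch where "ch a b = snd (SOME z. fus_basis_out R n \<rho> a \<sigma> b z)" for a b
  have ch: "fus_basis_out R n \<rho> a \<sigma> b (\<rho> \<circ> \<sigma>, ch a b)"
    if "a \<in> fixed_vecs R n \<rho>" "b \<in> fixed_vecs R n \<sigma>" for a b
  proof -
    let ?z = "SOME z. fus_basis_out R n \<rho> a \<sigma> b z"
    have "fus_basis_out R n \<rho> a \<sigma> b ?z" using fus_basis_out_exists[OF p\<rho> p\<sigma> that] by (rule someI_ex)
    moreover have "fst ?z = \<rho> \<circ> \<sigma>"
      using calculation unfolding fus_basis_out_def act_def bare_def by auto
    ultimately show ?thesis unfolding ch_def by (metis prod.collapse)
  qed
  have one_one: "fus_basis_out R n \<rho> ?one \<sigma> ?one (\<rho> \<circ> \<sigma>, c) \<Longrightarrow> (\<rho> \<circ> \<sigma>, c) = bare R (\<rho> \<circ> \<sigma>)" for c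
    by (rule fus_basis_out_one[OF p\<rho> p\<sigma> F refine])
  show ?thesis
  proof (intro set_eqI iffI)
    fix z assume "z \<in> {z. fus_rel R n (bare R \<rho>) (bare R \<sigma>) z}"
    then obtain ch' where "fus_basis_out R n \<rho> ?one \<sigma> ?one (\<rho> \<circ> \<sigma>, ch' ?one ?one)"
      and "z = (\<rho> \<circ> \<sigma>, ch' ?one ?one)"
      using fus_rel_bare_iff one_vec_fixed by blast
    then show "z \<in> {bare R (\<rho> \<circ> \<sigma>)}" using one_one by simp
  next
    fix z assume "z \<in> {bare R (\<rho> \<circ> \<sigma>)}"
    then have "z = (\<rho> \<circ> \<sigma>, ch ?one ?one)"
      using one_one[OF ch[OF one_vec_fixed one_vec_fixed]] by simp
    then show "z \<in> {z. fus_rel R n (bare R \<rho>) (bare R \<sigma>) z}"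
      unfolding mem_Collect_eq fus_rel_bare_iff using ch by blast
  qed
qed

lemma fus_rel_bare_disjoint:
  assumes p\<rho>: "\<rho> permutes {..<n}" and p\<sigma>: "\<sigma> permutes {..<n}" and disj: "\<forall>k. \<rho> k = k \<or> \<sigma> k = k"
  shows "{z. fus_rel R n (bare R \<rho>) (bare R \<sigma>) z} = {bare R (\<rho> \<circ> \<sigma>)}"
  using fus_rel_bare[OF p\<rho> p\<sigma> Fcomp_disjoint[OF _ disj] orb_comp_disjoint[OF permutes_inj[OF p\<sigma>] disj]] .

lemma nested_outs_Cons_transpose:
  assumes p: "\<sigma> permutes {..<n}" and fix_i: "\<sigma> i = i" and ij: "i \<noteq> j" "i < n" "j < n"
    and \<tau>s: "\<sigma> = foldr (\<circ>) \<tau>s id" "nested_outs R n \<tau>s = {bare R \<sigma>}"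
  shows "nested_outs R n (transpose i j # \<tau>s) = {bare R (transpose i j \<circ> \<sigma>)}"
proof (cases \<tau>s)
  case Nil
  then show ?thesis using \<tau>s(1) by simp
next
  case (Cons t' ts)
  let ?t = "transpose i j"
  have pt: "?t permutes {..<n}" using ij by (simp add: permutes_swap_id)
  have "{z. fus_rel R n (bare R ?t) (bare R \<sigma>) z} = {bare R (?t \<circ> \<sigma>)}"
  proof (rule fus_rel_bare[OF pt p])
    show "Fcomp R n (transp_list cs) \<sigma> = tunit R" if "is_cycle_decomp n ?t cs" for cs
      using Fcomp_transpose[OF p fix_i ij that] .
    have "permutation (?t \<circ> \<sigma>)" using permutes_lessThan_permutation[OF permutes_compose[OF p pt]] .
    then show "?t x \<in> orb (?t \<circ> \<sigma>) x" for x using orb_transpose_comp fix_i by blast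
  qed
  then show ?thesis using \<tau>s(2) Cons by simp
qed

lemma bare_transpositions:
  assumes "\<sigma> permutes {..<n}"
  shows "\<exists>\<tau>s. (\<forall>\<tau>\<in>set \<tau>s. is_transposition n \<tau>) \<and> \<sigma> = foldr (\<circ>) \<tau>s id \<and> nested_outs R n \<tau>s = {bare R \<sigma>}"
proof -
  have "finite S \<Longrightarrow> \<sigma> permutes S \<Longrightarrow> S \<subseteq> {..<n} \<Longrightarrow> ?thesis" for S
  proof (induction S arbitrary: \<sigma> rule: finite_induct)
    case empty
    then have "\<sigma> = id" by (simp add: permutes_empty)
    then show ?case by (intro exI[of _ "[]"]) (simp add: id_def)
  next
    case (insert i S)
    let ?t = "transpose i (\<sigma> i)"
    let ?\<sigma>' = "?t \<circ> \<sigma>"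
    have p': "?\<sigma>' permutes S" by (rule permutes_insert_lemma[OF insert.prems(1)])
    obtain \<tau>s where \<tau>s: "\<forall>\<tau>\<in>set \<tau>s. is_transposition n \<tau>" "?\<sigma>' = foldr (\<circ>) \<tau>s id"
        "nested_outs R n \<tau>s = {bare R ?\<sigma>'}"
      using insert.IH[OF p'] insert.prems(2) by blast
    have \<sigma>_eq: "\<sigma> = ?t \<circ> ?\<sigma>'" by (simp add: o_assoc)
    show ?case
    proof (cases "\<sigma> i = i")
      case True
      then have "?\<sigma>' = \<sigma>" by simp
      then show ?thesis using \<tau>s by metis
    next
      case False
      have in_n: "i < n" "\<sigma> i < n"
        using insert.prems(2) permutes_in_image[OF permutes_subset[OF insert.prems], of i] by auto
      have p'n: "?\<sigma>' permutes {..<n}" using permutes_subset[OF p'] insert.prems(2) by blast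
      have fix_i: "?\<sigma>' i = i" using permutes_not_in[OF p' insert.hyps(2)] .
      have "nested_outs R n (?t # \<tau>s) = {bare R (?t \<circ> ?\<sigma>')}"
        by (rule nested_outs_Cons_transpose[OF p'n fix_i False[symmetric] in_n \<tau>s(2,3)])
      then have nested: "nested_outs R n (?t # \<tau>s) = {bare R \<sigma>}" by (simp only: \<sigma>_eq[symmetric])
      have "foldr (\<circ>) (?t # \<tau>s) id = ?t \<circ> ?\<sigma>'" using \<tau>s(2) by simp
      then have fold: "\<sigma> = foldr (\<circ>) (?t # \<tau>s) id" by (simp only: \<sigma>_eq[symmetric])
      have "is_transposition n ?t" unfolding is_transposition_def using in_n False by metis
      then have "\<forall>\<tau>\<in>set (?t # \<tau>s). is_transposition n \<tau>" using \<tau>s(1) by simp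
      then show ?thesis using nested fold by blast
    qed
  qed
  then show ?thesis using assms by blast
qed

end

theorem proposition4p17:
  fixes R :: "'a fusion_ring" and n :: nat
  assumes "fusion_data R" and "2 \<le> n"
  shows "(\<forall>\<rho> \<sigma>. \<rho> permutes {..<n} \<and> \<sigma> permutes {..<n} \<and> (\<forall>k. \<rho> k = k \<or> \<sigma> k = k) \<longrightarrow>
            {z. fus_rel R n (bare R \<rho>) (bare R \<sigma>) z} = {bare R (\<rho> \<circ> \<sigma>)} \<and>
            {z. fus_rel R n (bare R \<sigma>) (bare R \<rho>) z} = {bare R (\<rho> \<circ> \<sigma>)})
       \<and> (\<forall>\<sigma>. \<sigma> permutes {..<n} \<longrightarrow>
            (\<exists>\<tau>s. (\<forall>\<tau>\<in>set \<tau>s. is_transposition n \<tau>) \<and> \<sigma> = foldr (\<circ>) \<tau>s id \<and>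
                  nested_outs R n \<tau>s = {bare R \<sigma>}))"
proof -
  interpret fusion_rules R by (rule fusion_rules.intro[OF assms(1)])
  show ?thesis
  proof (intro conjI allI impI)
    fix \<rho> \<sigma> assume "\<rho> permutes {..<n} \<and> \<sigma> permutes {..<n} \<and> (\<forall>k. \<rho> k = k \<or> \<sigma> k = k)"
    then have p: "\<rho> permutes {..<n}" "\<sigma> permutes {..<n}" and disj: "\<forall>k. \<rho> k = k \<or> \<sigma> k = k"
      by blast+
    show "{z. fus_rel R n (bare R \<rho>) (bare R \<sigma>) z} = {bare R (\<rho> \<circ> \<sigma>)}"
      by (rule fus_rel_bare_disjoint[OF p disj])
    have "\<forall>k. \<sigma> k = k \<or> \<rho> k = k" using disj by blast
    then have "{z. fus_rel R n (bare R \<sigma>) (bare R \<rho>) z} = {bare R (\<sigma> \<circ> \<rho>)}"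
      by (rule fus_rel_bare_disjoint[OF p(2,1)])
    then show "{z. fus_rel R n (bare R \<sigma>) (bare R \<rho>) z} = {bare R (\<rho> \<circ> \<sigma>)}"
      using disjoint_perms_commute[OF permutes_inj[OF p(1)] permutes_inj[OF p(2)] disj] by simp
  qed (rule bare_transpositions)
qed

end
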